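(* Let $(X_1,X_2)$ be an extensible pair and $\lambda_1,\lambda_2\in\mathcal H_2^+$ with $\lambda_1\succcurlyeq\lambda_2$. Let $I(\lambda_1,\lambda_2)=\{\gamma\in\mathcal H_2^+:\lambda_1\succcurlyeq\gamma\succcurlyeq\lambda_2\}$ and, for $k$ large, $I^{(k)}(\lambda_1,\lambda_2)=\{\beta\in P^+(Z_k):\lambda_1^{(k)}-\beta\in Q^+(Z_k),\ \beta-\lambda_2^{(k)}\in Q^+(Z_k)\}$. Then (1) $I(\lambda_1,\lambda_2)$ is finite; (2) there exists $N$ such that for all $k\ge N$, $I^{(k)}(\lambda_1,\lambda_2)=\{\gamma^{(k)}:\gamma\in I(\lambda_1,\lambda_2)\}$.
   Context: Marked Dynkin diagram $(X,\xi)$: Dynkin diagram of a symmetrizable generalized Cartan matrix $C(X)$ with distinguished node $\xi$; $\det X=\det C(X)$; $X(-1)$ is $X$ minus $\xi$ ($\det\emptyset=1$); $\Delta_X=\det X-\det X(-1)$. $(X_1,X_2)$ is an extensible pair if $\det X_i\ne0$, $\Delta_i:=\Delta_{X_i}\ne0$, $\gcd(\det X_i,\Delta_i)=1$, $\gcd(\Delta_1,\Delta_2)=1$. $Z_k$: disjoint union of $X_1$ ($d_1$ nodes), a path $A_k$ (nodes $1..k$) and $X_2$ ($d_2$ nodes) plus simple edges $\xi_1$—$1$, $k$—$\xi_2$; $\omega_p,\alpha_p$ fundamental weights and simple roots of $\mathfrak g(Z_k)$; $P^+(Z_k)$ dominant integral weights, $Q^+(Z_k)=\sum\mathbb Z_{\ge0}\alpha_p$.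 Numberings: for $X$ with $d$ nodes, a bijection $\epsilon:N(X)\to\{1..d\}$ with $\epsilon(\xi)=d$; $X(m)$ is $X$ with path $\xi-1-\cdots-m$ attached, numbered $j=\epsilon$ on $X$, $j=d+t$ on the $t$-th new node; $\bar\omega^{(m)}$ the fundamental weight at $j=d+m$. For extensible $X$ there is (earlier work of Kleber and the author) a unique integer sequence $(a_i)$ with $-\Delta_X\omega_p-a_{j(p)}\bar\omega^{(m)}\in Q(X(m))$ for all $m\ge0$ with $\det X(m)\ne0$ and all $p\in X(m)$. Fix numberings $\epsilon_1,\epsilon_2$ and sequences $(a^{(1)}_i),(a^{(2)}_i)$. On $Z_k$: $i=\epsilon_1$ on $X_1$, $d_1+t$ on the $t$-th node of $A_k$, $d_1+d_2+k+1-\epsilon_2$ on $X_2$; $\bar\imath=\epsilon_2$ on $X_2$, $d_2+k+1-t$ on the $t$-th node of $A_k$, $d_1+d_2+k+1-\epsilon_1$ on $X_1$. $\mathcal H_1$: finitely supported integer sequences, $\mathcal H_1^+$ nonnegative ones, $\ell(x)=\max\{i:x_i\ne0\}$; $\mathcal H_2=\mathcal H_1^2$, $\mathcal H_2^+=(\mathcal H_1^+)^2$. For $\gamma=(x,y)$: $\mathrm{ls}(\gamma)=\max(\ell(x),d_1)$, $\mathrm{rs}(\gamma)=\max(\ell(y),d_2)$, $\gamma^{(k)}=\sum_p(x_{i(p)}+y_{\bar\imath(p)})\omega_p$ for $k\ge\mathrm{ls}+\mathrm{rs}-d_1-d_2$. $|\gamma|=\Delta_2\sum x_ia^{(1)}_i-\Delta_1\sum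 y_ia_i^{(2)}$. Partial order: for $\lambda_1,\lambda_2\in\mathcal H_2^+$ with $|\lambda_1|=|\lambda_2|$, let $l=\max(\mathrm{ls}(\lambda_1),\mathrm{ls}(\lambda_2))$, $r=\max(\mathrm{rs}(\lambda_1),\mathrm{rs}(\lambda_2))$; there are integers $b_i$ ($1\le i\le l-1$), $c_j$ ($1\le j\le r-1$), $s$ with $\lambda_1^{(k)}-\lambda_2^{(k)}=\sum_{i(p)\le l-1}b_{i(p)}\alpha_p+\sum_{i(p)\ge l,\bar\imath(p)\ge r}s\alpha_p+\sum_{\bar\imath(p)\le r-1}c_{\bar\imath(p)}\alpha_p$ for all $k\ge l+r-d_1-d_2$. Define $\lambda_1\succcurlyeq\lambda_2$ iff $|\lambda_1|=|\lambda_2|$ and all these $b_i,c_j,s$ are $\ge0$. *)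

theory Defs
  imports "HOL-Combinatorics.Permutations"
begin

text \<open>A marked Dynkin diagram (X,xi) with d nodes together with a
numbering epsilon (epsilon(xi) = d) is represented by its generalized Cartan matrix
C :: nat => nat => int, where C i j is the entry a_{ij} = <alpha_i^vee, alpha_j>
for the nodes numbered i, j in {1..d}; the marked node is d.
Weights of a diagram with n nodes are written in the basis of fundamental weights,
as integer coordinate functions on {1..n}; alpha_j has coordinates (C i j)_i.\<close>

definition detm :: "nat \<Rightarrow> (nat \<Rightarrow> nat \<Rightarrow> int) \<Rightarrow> int" where
  "detm n C = (\<Sum>p\<in>{p. p permutes {1..n}}. sign p * (\<Prod>i\<in>{1..n}. C i (p i)))"

definition sym_gcm :: "(nat \<Rightarrow> nat \<Rightarrow> int) \<Rightarrow> nat \<Rightarrow> bool" where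
  "sym_gcm C d \<longleftrightarrow>
     (\<forall>i\<in>{1..d}. C i i = 2) \<and>
     (\<forall>i\<in>{1..d}. \<forall>j\<in>{1..d}. i \<noteq> j \<longrightarrow> C i j \<le> 0 \<and> (C i j = 0 \<longleftrightarrow> C j i = 0)) \<and>
     (\<exists>D::nat \<Rightarrow> int. (\<forall>i\<in>{1..d}. D i > 0) \<and>
        (\<forall>i\<in>{1..d}. \<forall>j\<in>{1..d}. D i * C i j = D j * C j i))"

text \<open>Delta_X = det X - det X(-1); X(-1) is X minus the marked node d.\<close>
definition Delta :: "(nat \<Rightarrow> nat \<Rightarrow> int) \<Rightarrow> nat \<Rightarrow> int" where
  "Delta C d = detm d C - detm (d - 1) C"

definition extensible :: "(nat \<Rightarrow> nat \<Rightarrow> int) \<Rightarrow> nat \<Rightarrow> bool" where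
  "extensible C d \<longleftrightarrow> detm d C \<noteq> 0 \<and> Delta C d \<noteq> 0 \<and> gcd (detm d C) (Delta C d) = 1"

definition extensible_pair ::
  "(nat \<Rightarrow> nat \<Rightarrow> int) \<Rightarrow> nat \<Rightarrow> (nat \<Rightarrow> nat \<Rightarrow> int) \<Rightarrow> nat \<Rightarrow> bool" where
  "extensible_pair C1 d1 C2 d2 \<longleftrightarrow>
     extensible C1 d1 \<and> extensible C2 d2 \<and> gcd (Delta C1 d1) (Delta C2 d2) = 1"

definition in_Q :: "nat \<Rightarrow> (nat \<Rightarrow> nat \<Rightarrow> int) \<Rightarrow> (nat \<Rightarrow> int) \<Rightarrow> bool" where
  "in_Q n C v \<longleftrightarrow> (\<exists>c::nat \<Rightarrow> int. \<forall>i\<in>{1..n}. v i = (\<Sum>j\<in>{1..n}. C i j * c j))"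

definition in_Qplus :: "nat \<Rightarrow> (nat \<Rightarrow> nat \<Rightarrow> int) \<Rightarrow> (nat \<Rightarrow> int) \<Rightarrow> bool" where
  "in_Qplus n C v \<longleftrightarrow> (\<exists>c::nat \<Rightarrow> int. (\<forall>j\<in>{1..n}. c j \<ge> 0) \<and>
       (\<forall>i\<in>{1..n}. v i = (\<Sum>j\<in>{1..n}. C i j * c j)))"

text \<open>X(m): the path d - (d+1) - ... - (d+m) attached at the marked node d
 (entries relevant on {1..d+m}).\<close>
definition ext_path :: "(nat \<Rightarrow> nat \<Rightarrow> int) \<Rightarrow> nat \<Rightarrow> nat \<Rightarrow> nat \<Rightarrow> int" where
  "ext_path C d i j =
     (if i \<le> d \<and> j \<le> d then C i j
      else if i = j then 2
      else if (i = j + 1 \<or> j = i + 1) \<and> d \<le> min i j then -1 else 0)"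

definition a_seq_ok :: "(nat \<Rightarrow> nat \<Rightarrow> int) \<Rightarrow> nat \<Rightarrow> (nat \<Rightarrow> int) \<Rightarrow> bool" where
  "a_seq_ok C d a \<longleftrightarrow>
     (\<forall>m p. detm (d + m) (ext_path C d) \<noteq> 0 \<longrightarrow> p \<in> {1..d + m} \<longrightarrow>
        in_Q (d + m) (ext_path C d)
          (\<lambda>i. - Delta C d * (if i = p then 1 else 0) - a p * (if i = d + m then 1 else 0)))"

text \<open>Cartan matrix of Z_k, in the numbering i of the paper (nodes {1..d1+d2+k});
 the node of X2 numbered epsilon_2 = e sits at i = d1+d2+k+1-e, and ibar = d1+d2+k+1-i.\<close>
definition Zmat ::
  "(nat \<Rightarrow> nat \<Rightarrow> int) \<Rightarrow> nat \<Rightarrow> (nat \<Rightarrow> nat \<Rightarrow> int) \<Rightarrow> nat \<Rightarrow> nat \<Rightarrow> nat \<Rightarrow> nat \<Rightarrow> int" where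
  "Zmat C1 d1 C2 d2 k i j =
     (let n = d1 + d2 + k in
      if i \<le> d1 \<and> j \<le> d1 then C1 i j
      else if d1 + k < i \<and> d1 + k < j then C2 (n + 1 - i) (n + 1 - j)
      else if i = j then 2
      else if (i = j + 1 \<or> j = i + 1) \<and> d1 \<le> min i j \<and> max i j \<le> d1 + k + 1 then -1
      else 0)"

text \<open>Finitely supported integer sequences indexed by i >= 1 (value at 0 fixed to 0).\<close>
definition H1plus :: "(nat \<Rightarrow> int) set" where
  "H1plus = {x. x 0 = 0 \<and> finite {i. x i \<noteq> 0} \<and> (\<forall>i. x i \<ge> 0)}"

definition H2plus :: "((nat \<Rightarrow> int) \<times> (nat \<Rightarrow> int)) set" where
  "H2plus = H1plus \<times> H1plus"

definition ell :: "(nat \<Rightarrow> int) \<Rightarrow> nat" where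
  "ell x = Max (insert 0 {i. x i \<noteq> 0})"

definition ls :: "nat \<Rightarrow> (nat \<Rightarrow> int) \<times> (nat \<Rightarrow> int) \<Rightarrow> nat" where
  "ls d1 \<gamma> = max (ell (fst \<gamma>)) d1"

definition rs :: "nat \<Rightarrow> (nat \<Rightarrow> int) \<times> (nat \<Rightarrow> int) \<Rightarrow> nat" where
  "rs d2 \<gamma> = max (ell (snd \<gamma>)) d2"

definition lift :: "nat \<Rightarrow> nat \<Rightarrow> nat \<Rightarrow> (nat \<Rightarrow> int) \<times> (nat \<Rightarrow> int) \<Rightarrow> nat \<Rightarrow> int" where
  "lift d1 d2 k \<gamma> = (\<lambda>i. if i \<in> {1..d1 + d2 + k}
                          then fst \<gamma> i + snd \<gamma> (d1 + d2 + k + 1 - i) else 0)"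

definition gnorm ::
  "(nat \<Rightarrow> nat \<Rightarrow> int) \<Rightarrow> nat \<Rightarrow> (nat \<Rightarrow> nat \<Rightarrow> int) \<Rightarrow> nat \<Rightarrow> (nat \<Rightarrow> int) \<Rightarrow> (nat \<Rightarrow> int)
     \<Rightarrow> (nat \<Rightarrow> int) \<times> (nat \<Rightarrow> int) \<Rightarrow> int" where
  "gnorm C1 d1 C2 d2 a1 a2 \<gamma> =
     Delta C2 d2 * (\<Sum>i\<in>{1..ell (fst \<gamma>)}. fst \<gamma> i * a1 i)
     - Delta C1 d1 * (\<Sum>i\<in>{1..ell (snd \<gamma>)}. snd \<gamma> i * a2 i)"

definition succeq ::
  "(nat \<Rightarrow> nat \<Rightarrow> int) \<Rightarrow> nat \<Rightarrow> (nat \<Rightarrow> nat \<Rightarrow> int) \<Rightarrow> nat \<Rightarrow> (nat \<Rightarrow> int) \<Rightarrow> (nat \<Rightarrow> int)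
     \<Rightarrow> (nat \<Rightarrow> int) \<times> (nat \<Rightarrow> int) \<Rightarrow> (nat \<Rightarrow> int) \<times> (nat \<Rightarrow> int) \<Rightarrow> bool" where
  "succeq C1 d1 C2 d2 a1 a2 lam1 lam2 \<longleftrightarrow>
     lam1 \<in> H2plus \<and> lam2 \<in> H2plus \<and>
     gnorm C1 d1 C2 d2 a1 a2 lam1 = gnorm C1 d1 C2 d2 a1 a2 lam2 \<and>
     (let l = max (ls d1 lam1) (ls d1 lam2); r = max (rs d2 lam1) (rs d2 lam2) in
      \<exists>(b::nat \<Rightarrow> int) (c::nat \<Rightarrow> int) (s::int).
        (\<forall>i\<in>{1..l - 1}. b i \<ge> 0) \<and> (\<forall>j\<in>{1..r - 1}. c j \<ge> 0) \<and> s \<ge> 0 \<and>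
        (\<forall>k. l + r - d1 - d2 \<le> k \<longrightarrow>
           (let n = d1 + d2 + k in
            \<forall>i\<in>{1..n}. lift d1 d2 k lam1 i - lift d1 d2 k lam2 i =
              (\<Sum>j\<in>{1..n}. Zmat C1 d1 C2 d2 k i j *
                 (if j \<le> l - 1 then b j
                  else if n + 1 - j \<le> r - 1 then c (n + 1 - j) else s)))))"

definition Iset ::
  "(nat \<Rightarrow> nat \<Rightarrow> int) \<Rightarrow> nat \<Rightarrow> (nat \<Rightarrow> nat \<Rightarrow> int) \<Rightarrow> nat \<Rightarrow> (nat \<Rightarrow> int) \<Rightarrow> (nat \<Rightarrow> int)
     \<Rightarrow> (nat \<Rightarrow> int) \<times> (nat \<Rightarrow> int) \<Rightarrow> (nat \<Rightarrow> int) \<times> (nat \<Rightarrow> int)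
     \<Rightarrow> ((nat \<Rightarrow> int) \<times> (nat \<Rightarrow> int)) set" where
  "Iset C1 d1 C2 d2 a1 a2 lam1 lam2 =
     {\<gamma> \<in> H2plus. succeq C1 d1 C2 d2 a1 a2 lam1 \<gamma> \<and> succeq C1 d1 C2 d2 a1 a2 \<gamma> lam2}"

definition Ik ::
  "(nat \<Rightarrow> nat \<Rightarrow> int) \<Rightarrow> nat \<Rightarrow> (nat \<Rightarrow> nat \<Rightarrow> int) \<Rightarrow> nat \<Rightarrow> nat
     \<Rightarrow> (nat \<Rightarrow> int) \<times> (nat \<Rightarrow> int) \<Rightarrow> (nat \<Rightarrow> int) \<times> (nat \<Rightarrow> int) \<Rightarrow> (nat \<Rightarrow> int) set" where
  "Ik C1 d1 C2 d2 k lam1 lam2 =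
     (let n = d1 + d2 + k in
      {\<beta>. (\<forall>i. i \<notin> {1..n} \<longrightarrow> \<beta> i = 0) \<and> (\<forall>i\<in>{1..n}. \<beta> i \<ge> 0) \<and>
           in_Qplus n (Zmat C1 d1 C2 d2 k) (\<lambda>i. lift d1 d2 k lam1 i - \<beta> i) \<and>
           in_Qplus n (Zmat C1 d1 C2 d2 k) (\<lambda>i. \<beta> i - lift d1 d2 k lam2 i)})"

end

(*
  For large k the Cartan matrix of Z_k is nondegenerate: a kernel vector is linear along the
  path, and Cramer's rule on both arms forces its slope times det X1(-1) Delta2 + det X2 Delta1
  + k Delta1 Delta2 to vanish.  Hence for beta in I^(k) the root coordinates e of
  lambda1^(k) - beta and e' of beta - lambda2^(k) add up to the coordinates of
  lambda1^(k) - lambda2^(k), which equal the constant s between the supports.  There e is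
  convex (lambda1^(k) vanishes and beta >= 0) with values in [0, s], hence flat away from the
  s-neighbourhoods of the supports, and beta vanishes there.  So beta is the lift of some gamma
  in H2+ whose supports are bounded independently of k.  Conversely, a nonnegative solution of
  the Z_k equation with one flat step has the shape required in the definition of >=: its two
  halves are k-independent equations in X1(inf) and X2(inf), and the condition |.| on the norms
  follows by pairing them with the sequences a (det X(m) = det X + m Delta is coprime to Delta).
  Finiteness of I follows from the bounds 0 <= e <= coordinates of lambda1^(k) - lambda2^(k).
*)
theory Submission
  imports Defs "Jordan_Normal_Form.Determinant"
begin

section \<open>Integer matrices indexed from 1\<close>

abbreviation mat_apply :: "nat \<Rightarrow> (nat \<Rightarrow> nat \<Rightarrow> int) \<Rightarrow> (nat \<Rightarrow> int) \<Rightarrow> nat \<Rightarrow> int" where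
  "mat_apply n C g i \<equiv> \<Sum>j\<in>{1..n}. C i j * g j"

abbreviation jnf_mat :: "nat \<Rightarrow> (nat \<Rightarrow> nat \<Rightarrow> int) \<Rightarrow> int mat" where
  "jnf_mat n C \<equiv> mat n n (\<lambda>(i, j). C (Suc i) (Suc j))"

lemma detm_eq_det: "detm n C = det (jnf_mat n C)"
proof -
  let ?f = "\<lambda>x::nat. x - 1"
  have bij1: "bij_betw ?f {1..n} {0..<n}"
    by (rule bij_betw_byWitness[where f' = Suc]) auto
  have bij2: "bij_betw Suc {0..<n} {1..n}"
    by (rule bij_betw_byWitness[where f' = ?f]) auto
  have "det (jnf_mat n C) =
     (\<Sum>q\<in>{q. q permutes {0..<n}}. of_int (sign q) * (\<Prod>i=0..<n. C (Suc i) (Suc (q i))))"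
    unfolding det_def by (auto intro!: sum.cong prod.cong)
  also have "\<dots> = (\<Sum>p\<in>{p. p permutes {1..n}}. sign p * (\<Prod>i\<in>{1..n}. C i (p i)))"
  proof (rule sym, rule sum.reindex_bij_witness[where j = "map_permutation {1..n} ?f"
                                                     and i = "map_permutation {0..<n} Suc"])
    fix p assume p: "p \<in> {p. p permutes {1..n}}"
    show "map_permutation {0..<n} Suc (map_permutation {1..n} ?f p) = p"
      by (rule map_permutation_compose_inv[OF bij1]) (use p in auto)
    show "map_permutation {1..n} ?f p \<in> {q. q permutes {0..<n}}"
      using map_permutation_permutes[OF bij1] p by auto
    let ?q = "map_permutation {1..n} ?f p"
    have "inj_on ?f {1..n}" using bij1 by (auto simp: bij_betw_def)
    then have q: "?q i = p (Suc i) - 1" if "i < n" for i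
      using map_permutation_apply[of ?f "{1..n}" "Suc i" p] that by simp
    have "Suc (?q i) = p (Suc i)" if "i < n" for i
      using q[OF that] p that permutes_in_image[of p "{1..n}" "Suc i"] by auto
    then have "(\<Prod>i=0..<n. C (Suc i) (Suc (?q i))) = (\<Prod>i=0..<n. C (Suc i) (p (Suc i)))"
      by (intro prod.cong) auto
    also have "\<dots> = (\<Prod>i\<in>{1..n}. C i (p i))"
      using prod.atLeast1_atMost_eq[of "\<lambda>i. C i (p i)" n] by (simp add: atLeast0LessThan)
    moreover have "sign ?q = sign p"
      by (rule sign_map_permutation) (use p bij1 in \<open>auto simp: bij_betw_def\<close>)
    ultimately show "of_int (sign ?q) * (\<Prod>i=0..<n. C (Suc i) (Suc (?q i))) =
                     sign p * (\<Prod>i\<in>{1..n}. C i (p i))"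
      by simp
  next
    fix q assume q: "q \<in> {q. q permutes {0..<n}}"
    show "map_permutation {1..n} ?f (map_permutation {0..<n} Suc q) = q"
      by (rule map_permutation_compose_inv[OF bij2]) (use q in auto)
    show "map_permutation {0..<n} Suc q \<in> {p. p permutes {1..n}}"
      using map_permutation_permutes[OF bij2] q by auto
  qed
  finally show ?thesis unfolding detm_def by simp
qed

lemma jnf_mat_mult_vec:
  "jnf_mat n C *\<^sub>v vec n (\<lambda>j. g (Suc j)) = vec n (\<lambda>i. mat_apply n C g (Suc i))"
  by (rule eq_vecI)
     (simp_all add: mult_mat_vec_def scalar_prod_def sum.atLeast1_atMost_eq atLeast0LessThan)

lemma detm_mult_eq_adj_sum:
  assumes "j < n"
  shows "detm n C * g (Suc j) =
           (\<Sum>i<n. adj_mat (jnf_mat n C) $$ (j, i) * mat_apply n C g (Suc i))"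
proof -
  let ?M = "jnf_mat n C" and ?v = "vec n (\<lambda>j. g (Suc j))"
  have M: "?M \<in> carrier_mat n n" by simp
  have "adj_mat ?M *\<^sub>v (?M *\<^sub>v ?v) = (adj_mat ?M * ?M) *\<^sub>v ?v"
    using adj_mat(1)[OF M] M by (intro assoc_mult_mat_vec[symmetric]) auto
  also have "\<dots> = (det ?M \<cdot>\<^sub>m 1\<^sub>m n) *\<^sub>v ?v"
    using adj_mat(3)[OF M] by simp
  finally have vec_eq: "adj_mat ?M *\<^sub>v (?M *\<^sub>v ?v) = (det ?M \<cdot>\<^sub>m 1\<^sub>m n) *\<^sub>v ?v" .
  have "(adj_mat ?M *\<^sub>v (?M *\<^sub>v ?v)) $ j =
        (\<Sum>i=0..<n. det ?M * (if i = j then 1 else 0) * g (Suc i))"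
    unfolding vec_eq using assms by (simp add: mult_mat_vec_def scalar_prod_def)
  also have "\<dots> = (\<Sum>i=0..<n. if i = j then det ?M * g (Suc i) else 0)"
    by (rule sum.cong) auto
  finally have "(adj_mat ?M *\<^sub>v (?M *\<^sub>v ?v)) $ j = det ?M * g (Suc j)"
    using assms by simp
  then show ?thesis
    using adj_mat(1)[OF M] assms
    by (simp add: detm_eq_det mult_mat_vec_def scalar_prod_def sum.atLeast1_atMost_eq atLeast0LessThan)
qed

lemma detm_nonzero_iff_kernel_trivial:
  "detm n C \<noteq> 0 \<longleftrightarrow>
     (\<forall>g. (\<forall>i\<in>{1..n}. mat_apply n C g i = 0) \<longrightarrow> (\<forall>j\<in>{1..n}. g j = 0))"
proof (intro iffI allI impI ballI)
  fix g j assume D: "detm n C \<noteq> 0" and h: "\<forall>i\<in>{1..n}. mat_apply n C g i = 0" and "j \<in> {1..n}"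
  then obtain j' where j: "j = Suc j'" "j' < n" by (cases j) auto
  have "detm n C * g (Suc j') = 0"
    using detm_mult_eq_adj_sum[OF j(2), of C g] h by simp
  then show "g j = 0" using D j by simp
next
  assume K: "\<forall>g. (\<forall>i\<in>{1..n}. mat_apply n C g i = 0) \<longrightarrow> (\<forall>j\<in>{1..n}. g j = 0)"
  show "detm n C \<noteq> 0"
  proof
    assume "detm n C = 0"
    then obtain v where v: "v \<in> carrier_vec n" "v \<noteq> 0\<^sub>v n" "jnf_mat n C *\<^sub>v v = 0\<^sub>v n"
      using det_0_iff_vec_prod_zero[of "jnf_mat n C" n] by (auto simp: detm_eq_det)
    define g where "g j = v $ (j - 1)" for j
    have v_eq: "v = vec n (\<lambda>j. g (Suc j))"
      using v(1) by (auto simp: g_def)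
    have "\<forall>i\<in>{1..n}. mat_apply n C g i = 0"
    proof
      fix i assume "i \<in> {1..n}"
      then obtain i' where "i = Suc i'" "i' < n" by (cases i) auto
      then show "mat_apply n C g i = 0"
        using v(3) arg_cong[OF v_eq, of "\<lambda>w. (jnf_mat n C *\<^sub>v w) $ i'"]
        by (simp add: jnf_mat_mult_vec)
    qed
    with K have g0: "\<forall>j\<in>{1..n}. g j = 0" by blast
    have "v $ i = 0" if "i < n" for i
      using that g0[rule_format, of "Suc i"] by (simp add: g_def)
    then have "v = 0\<^sub>v n" using v(1) by (intro eq_vecI) auto
    with v(2) show False by contradiction
  qed
qed

lemma cramer_last_coordinate:
  assumes "n \<ge> 1" and h: "\<forall>i\<in>{1..n}. mat_apply n C g i = (if i = n then r else 0)"
  shows "g n * detm n C = r * detm (n - 1) C"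
proof -
  let ?M = "jnf_mat n C"
  have n: "n - 1 < n" "Suc (n - 1) = n" using assms(1) by auto
  have "detm n C * g n = (\<Sum>i<n. adj_mat ?M $$ (n - 1, i) * mat_apply n C g (Suc i))"
    using detm_mult_eq_adj_sum[OF n(1), of C g] n by simp
  also have "\<dots> = (\<Sum>i<n. if i = n - 1 then adj_mat ?M $$ (n - 1, i) * r else 0)"
    using h n by (intro sum.cong) auto
  also have "\<dots> = det (mat_delete ?M (n - 1) (n - 1)) * r"
    using n by (simp add: adj_mat_def cofactor_def)
  also have "mat_delete ?M (n - 1) (n - 1) = jnf_mat (n - 1) C"
    by (rule eq_matI) (auto simp: mat_delete_def)
  finally show ?thesis by (simp add: detm_eq_det mult.commute)
qed

section \<open>Diagrams with a path attached\<close>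

lemma sum_atLeast1_if_le:
  fixes f :: "nat \<Rightarrow> int"
  assumes "m \<le> n"
  shows "(\<Sum>j\<in>{1..n}. if j \<le> m then f j else 0) = (\<Sum>j\<in>{1..m}. f j)"
proof -
  have "(\<Sum>j\<in>{1..n}. if j \<le> m then f j else 0) = (\<Sum>j\<in>{j\<in>{1..n}. j \<le> m}. f j)"
    by (rule sum.inter_filter[symmetric]) simp
  also have "{j\<in>{1..n}. j \<le> m} = {1..m}" using assms by auto
  finally show ?thesis .
qed

text \<open>\<open>ext_apply C d g i\<close> is the \<open>i\<close>-th coordinate of \<open>X(\<infinity>) g\<close>, where \<open>X(\<infinity>)\<close> is \<open>X\<close> with an
  infinite path \<open>d - (d+1) - (d+2) - \<dots>\<close> attached at the marked node.\<close>
definition ext_apply :: "(nat \<Rightarrow> nat \<Rightarrow> int) \<Rightarrow> nat \<Rightarrow> (nat \<Rightarrow> int) \<Rightarrow> nat \<Rightarrow> int" where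
  "ext_apply C d g i =
     (if i \<le> d then mat_apply d C g i - (if i = d then g (d + 1) else 0)
      else 2 * g i - g (i - 1) - g (i + 1))"

lemma ext_path_base_row:
  "i \<le> d \<Longrightarrow> ext_path C d i j = (if j \<le> d then C i j else if i = d \<and> j = d + 1 then -1 else 0)"
  unfolding ext_path_def by auto

lemma ext_path_path_row:
  "d < i \<Longrightarrow> ext_path C d i j = (if j = i then 2 else if j = i - 1 \<or> j = i + 1 then -1 else 0)"
  unfolding ext_path_def by auto

lemma ext_path_apply_base:
  assumes "i \<le> d" "d < N"
  shows "mat_apply N (ext_path C d) g i = mat_apply d C g i - (if i = d then g (d + 1) else 0)"
proof -
  have "mat_apply N (ext_path C d) g i =
        (\<Sum>j\<in>{1..N}. (if j \<le> d then C i j * g j else 0) + (if j = d + 1 then (if i = d then - g j else 0) else 0))"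
    using assms(1) by (intro sum.cong) (auto simp: ext_path_base_row)
  then show ?thesis
    using assms sum_atLeast1_if_le[of d N "\<lambda>j. C i j * g j"] by (simp add: sum.distrib)
qed

lemma ext_path_apply_path:
  assumes "1 \<le> d" "d < i" "i \<le> N"
  shows "mat_apply N (ext_path C d) g i = 2 * g i - g (i - 1) - (if i = N then 0 else g (i + 1))"
proof -
  have "mat_apply N (ext_path C d) g i =
        (\<Sum>j\<in>{1..N}. (if j = i then 2 * g j else 0) + (if j = i - 1 then - g j else 0)
                       + (if j = i + 1 then - g j else 0))"
    using assms(2) by (intro sum.cong) (auto simp: ext_path_path_row)
  moreover have "i \<in> {1..N}" "i - 1 \<in> {1..N}" "i - 1 \<noteq> i" "i + 1 \<in> {1..N} \<longleftrightarrow> i \<noteq> N"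
    using assms by auto
  ultimately show ?thesis
    by (simp add: sum.distrib del: One_nat_def)
qed

lemma ext_path_apply:
  assumes "1 \<le> d" "d < N" "i < N"
  shows "mat_apply N (ext_path C d) g i = ext_apply C d g i"
  using assms ext_path_apply_base[of i d N C g] ext_path_apply_path[of d i N C g]
  by (auto simp: ext_apply_def)

lemma ext_apply_cong:
  assumes "\<And>j. j \<le> max d (i + 1) \<Longrightarrow> g j = h j"
  shows "ext_apply C d g i = ext_apply C d h i"
  using assms unfolding ext_apply_def by (auto intro!: sum.cong)

lemma Zmat_eq_ext_path: "i \<le> d1 + k \<Longrightarrow> Zmat C1 d1 C2 d2 k i j = ext_path C1 d1 i j"
  unfolding Zmat_def ext_path_def Let_def by auto

lemma Zmat_reflect:
  assumes "i \<in> {1..d1 + d2 + k}" "j \<in> {1..d1 + d2 + k}"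
  shows "Zmat C1 d1 C2 d2 k i j = Zmat C2 d2 C1 d1 k (d1 + d2 + k + 1 - i) (d1 + d2 + k + 1 - j)"
proof -
  define n where "n = d1 + d2 + k"
  have i: "1 \<le> i" "i \<le> n" and j: "1 \<le> j" "j \<le> n" using assms by (auto simp: n_def)
  have n': "d2 + d1 + k = n" by (simp add: n_def)
  have inv: "n + 1 - (n + 1 - i) = i" "n + 1 - (n + 1 - j) = j" using i j by auto
  have c1: "(n + 1 - i \<le> d2 \<and> n + 1 - j \<le> d2) = (d1 + k < i \<and> d1 + k < j)"
    and c2: "(d2 + k < n + 1 - i \<and> d2 + k < n + 1 - j) = (i \<le> d1 \<and> j \<le> d1)"
    and c3: "(n + 1 - i = n + 1 - j) = (i = j)"
    and c4: "(n + 1 - i = n + 1 - j + 1 \<or> n + 1 - j = n + 1 - i + 1) = (i = j + 1 \<or> j = i + 1)"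
    and c5: "(d2 \<le> min (n + 1 - i) (n + 1 - j) \<and> max (n + 1 - i) (n + 1 - j) \<le> d2 + k + 1) =
             (d1 \<le> min i j \<and> max i j \<le> d1 + k + 1)"
    using i j by (auto simp: n_def)
  show ?thesis
    unfolding Zmat_def Let_def n_def[symmetric] n' c1 c2 c3 c4 c5 inv by auto
qed

lemma Zmat_apply_left:
  assumes "1 \<le> d1" "1 \<le> d2" "i \<le> d1 + k"
  shows "mat_apply (d1 + d2 + k) (Zmat C1 d1 C2 d2 k) g i = ext_apply C1 d1 g i"
proof -
  have "mat_apply (d1 + d2 + k) (Zmat C1 d1 C2 d2 k) g i = mat_apply (d1 + d2 + k) (ext_path C1 d1) g i"
    using assms(3) by (intro sum.cong) (auto simp: Zmat_eq_ext_path)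
  also have "\<dots> = ext_apply C1 d1 g i"
    using assms by (intro ext_path_apply) auto
  finally show ?thesis .
qed

lemma Zmat_apply_right:
  assumes "1 \<le> d1" "1 \<le> d2" "i \<in> {1..d2 + k}"
  shows "mat_apply (d1 + d2 + k) (Zmat C1 d1 C2 d2 k) g (d1 + d2 + k + 1 - i) =
         ext_apply C2 d2 (\<lambda>j. g (d1 + d2 + k + 1 - j)) i"
proof -
  let ?n = "d1 + d2 + k"
  have "mat_apply ?n (Zmat C1 d1 C2 d2 k) g (?n + 1 - i) =
        (\<Sum>j\<in>{1..?n}. Zmat C1 d1 C2 d2 k (?n + 1 - i) (?n + 1 - j) * g (?n + 1 - j))"
    by (rule sum.atLeastAtMost_rev)
  also have "\<dots> = mat_apply (d2 + d1 + k) (Zmat C2 d2 C1 d1 k) (\<lambda>j. g (?n + 1 - j)) i"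
  proof (rule sum.cong)
    fix j assume "j \<in> {1..d2 + d1 + k}"
    then have "?n + 1 - i \<in> {1..?n}" "?n + 1 - j \<in> {1..?n}"
      and "?n + 1 - (?n + 1 - i) = i" "?n + 1 - (?n + 1 - j) = j"
      using assms by auto
    then show "Zmat C1 d1 C2 d2 k (?n + 1 - i) (?n + 1 - j) * g (?n + 1 - j) =
               Zmat C2 d2 C1 d1 k i j * g (?n + 1 - j)"
      using Zmat_reflect[of "?n + 1 - i" d1 d2 k "?n + 1 - j" C1 C2] by simp
  qed (simp add: add.commute)
  also have "\<dots> = ext_apply C2 d2 (\<lambda>j. g (?n + 1 - j)) i"
    using assms by (intro Zmat_apply_left) auto
  finally show ?thesis .
qed

section \<open>Discrete second differences\<close>

lemma zero_second_diff_imp_linear: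
  fixes g :: "nat \<Rightarrow> int"
  assumes h: "\<And>i. a < i \<Longrightarrow> i < b \<Longrightarrow> 2 * g i - g (i - 1) - g (i + 1) = 0"
  shows "a + j \<le> b \<Longrightarrow> g (a + j) = g a + int j * (g (a + 1) - g a)"
proof (induction j rule: less_induct)
  case (less j)
  show ?case
  proof (cases "j \<le> 1")
    case True
    then show ?thesis by (cases j) auto
  next
    case False
    then obtain j' where j': "j = Suc (Suc j')" by (cases j; cases "j - 1") auto
    have "2 * g (a + Suc j') - g (a + j') - g (a + j) = 0"
      using h[of "a + Suc j'"] less.prems j' by simp
    then show ?thesis
      using less.IH[of j'] less.IH[of "Suc j'"] less.prems j' by (simp add: algebra_simps)
  qed
qed

lemma zero_second_diff_imp_const:
  fixes g :: "nat \<Rightarrow> int"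
  assumes h: "\<And>i. a < i \<Longrightarrow> i < b \<Longrightarrow> 2 * g i - g (i - 1) - g (i + 1) = 0"
    and q: "a \<le> q" "q < b" "g q = g (q + 1)"
    and p: "a \<le> p" "p \<le> b"
  shows "g p = g a"
proof -
  note lin = zero_second_diff_imp_linear[of a b g, OF h]
  have "g (a + (q - a)) = g a + int (q - a) * (g (a + 1) - g a)"
    using q by (intro lin) auto
  moreover have "g (a + (q - a + 1)) = g a + int (q - a + 1) * (g (a + 1) - g a)"
    using q by (intro lin) auto
  ultimately have "g (a + 1) - g a = 0" using q by (simp add: algebra_simps)
  then show "g p = g a" using lin[of "p - a"] p by simp
qed

lemma convex_steps_mono:
  fixes e :: "nat \<Rightarrow> int"
  assumes h: "\<And>p. a < p \<Longrightarrow> p < b \<Longrightarrow> e (p - 1) + e (p + 1) - 2 * e p \<ge> 0"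
  shows "a \<le> q \<Longrightarrow> q + j < b \<Longrightarrow> e (q + 1) - e q \<le> e (q + j + 1) - e (q + j)"
proof (induction j)
  case (Suc j)
  have "e (q + Suc j - 1) + e (q + Suc j + 1) - 2 * e (q + Suc j) \<ge> 0"
    by (rule h) (use Suc.prems in auto)
  then show ?case using Suc by simp
qed simp

text \<open>A nonzero step forces all later (or all earlier) steps to be nonzero of the same sign,
  so the sequence would leave \<open>[0, S]\<close> within \<open>S + 1\<close> steps.\<close>
lemma convex_bounded_imp_flat:
  fixes e :: "nat \<Rightarrow> int" and S :: nat
  assumes h: "\<And>p. a < p \<Longrightarrow> p < b \<Longrightarrow> e (p - 1) + e (p + 1) - 2 * e p \<ge> 0"
    and bd: "\<And>p. a \<le> p \<Longrightarrow> p \<le> b \<Longrightarrow> 0 \<le> e p \<and> e p \<le> int S"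
    and p: "a + S \<le> p" "p + 1 + S \<le> b"
  shows "e (p + 1) = e p"
proof (rule ccontr)
  note mono = convex_steps_mono[OF h]
  assume ne: "e (p + 1) \<noteq> e p"
  show False
  proof (cases "e (p + 1) < e p")
    case True
    have "e (a + j) \<le> e a - int j" if "j \<le> p + 1 - a" for j
      using that
    proof (induction j)
      case (Suc j)
      have "e (a + j + 1) - e (a + j) \<le> e (a + j + (p - (a + j)) + 1) - e (a + j + (p - (a + j)))"
        using Suc.prems p by (intro mono) auto
      then have "e (a + j + 1) - e (a + j) \<le> -1" using True Suc.prems p by simp
      then show ?case using Suc by simp
    qed simp
    from this[of "p + 1 - a"] show False
      using p bd[of a] bd[of "p + 1"] by simp
  next
    case False
    then have up: "e (p + 1) > e p" using ne by simp
    have "e (p + j) \<ge> e p + int j" if "j \<le> b - p" for j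
      using that
    proof (induction j)
      case (Suc j)
      have "e (p + 1) - e p \<le> e (p + j + 1) - e (p + j)"
        using Suc.prems p by (intro mono) auto
      then show ?case using Suc up by simp
    qed simp
    from this[of "b - p"] show False
      using p bd[of b] bd[of p] by simp
  qed
qed

section \<open>The diagrams X(m) and the sequence a\<close>

lemma ext_path_eq_last_unit:
  assumes d: "1 \<le> d" and m: "1 \<le> m"
    and h: "\<forall>i\<in>{1..d + m}. mat_apply (d + m) (ext_path C d) g i = (if i = d + m then t else 0)"
  shows ext_path_eq_last_unit_base: "\<forall>i\<in>{1..d}. mat_apply d C g i = (if i = d then g (d + 1) else 0)"
    and ext_path_eq_last_unit_path: "\<forall>j\<le>m. g (d + j) = g d + int j * (g (d + 1) - g d)"
    and ext_path_eq_last_unit_slope: "t * Delta C d = (g (d + 1) - g d) * (detm d C + int m * Delta C d)"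
proof -
  show base: "\<forall>i\<in>{1..d}. mat_apply d C g i = (if i = d then g (d + 1) else 0)"
  proof
    fix i assume "i \<in> {1..d}"
    then have "i \<in> {1..d + m}" "i \<noteq> d + m" "i \<le> d" "d < d + m" using m by auto
    then show "mat_apply d C g i = (if i = d then g (d + 1) else 0)"
      using h[rule_format, of i] ext_path_apply_base[of i d "d + m" C g] by simp
  qed
  have "2 * g i - g (i - 1) - g (i + 1) = 0" if "d < i" "i < d + m" for i
    using that h[rule_format, of i] ext_path_apply_path[OF d, of i "d + m" C g] by simp
  then show path: "\<forall>j\<le>m. g (d + j) = g d + int j * (g (d + 1) - g d)"
    using zero_second_diff_imp_linear[of d "d + m" g] by simp
  have "2 * g (d + m) - g (d + m - 1) = t"
    using h[rule_format, of "d + m"] ext_path_apply_path[OF d, of "d + m" "d + m" C g] m by simp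
  moreover have "g (d + m - 1) = g d + int (m - 1) * (g (d + 1) - g d)"
    using path[rule_format, of "m - 1"] m by (simp add: add_diff_assoc)
  ultimately have t: "t = g d + (int m + 1) * (g (d + 1) - g d)"
    using path[rule_format, of m] m by (simp add: of_nat_diff algebra_simps)
  have "t * Delta C d = g d * detm d C - g d * detm (d - 1) C
                             + (int m + 1) * (g (d + 1) - g d) * Delta C d"
    unfolding t Delta_def by (simp add: algebra_simps)
  also have "g d * detm d C = g (d + 1) * detm (d - 1) C"
    by (rule cramer_last_coordinate[OF d base])
  finally show "t * Delta C d = (g (d + 1) - g d) * (detm d C + int m * Delta C d)"
    unfolding Delta_def by (simp add: algebra_simps)
qed

lemma ext_path_detm_nonzero:
  assumes d: "1 \<le> d" and m: "1 \<le> m" and "detm d C \<noteq> 0" and "Delta C d \<noteq> 0"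
    and "detm d C + int m * Delta C d \<noteq> 0"
  shows "detm (d + m) (ext_path C d) \<noteq> 0"
  unfolding detm_nonzero_iff_kernel_trivial
proof (intro allI impI ballI)
  fix g j assume "\<forall>i\<in>{1..d + m}. mat_apply (d + m) (ext_path C d) g i = 0" and j: "j \<in> {1..d + m}"
  then have h: "\<forall>i\<in>{1..d + m}. mat_apply (d + m) (ext_path C d) g i = (if i = d + m then 0 else 0)"
    by simp
  have flat: "g (d + 1) = g d"
    using ext_path_eq_last_unit_slope[OF d m h] assms by simp
  have "g d * detm d C = g (d + 1) * detm (d - 1) C"
    by (rule cramer_last_coordinate[OF d ext_path_eq_last_unit_base[OF d m h]])
  then have "g d = 0"
    using flat assms by (simp add: Delta_def algebra_simps)
  then have path: "\<forall>i\<le>m. g (d + i) = 0"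
    using ext_path_eq_last_unit_path[OF d m h] flat by simp
  then have "\<forall>i\<in>{1..d}. mat_apply d C g i = 0"
    using ext_path_eq_last_unit_base[OF d m h] path[rule_format, of 1] m by simp
  then have "\<forall>i\<in>{1..d}. g i = 0"
    using assms(3) detm_nonzero_iff_kernel_trivial by blast
  then show "g j = 0"
    using j path[rule_format, of "j - d"] by (cases "j \<le> d") auto
qed

lemma mat_apply_add_diff:
  "mat_apply n C (\<lambda>j. f j + g j - h j) i = mat_apply n C f i + mat_apply n C g i - mat_apply n C h i"
  by (simp add: algebra_simps sum.distrib sum_subtractf)

lemma in_Q_cong: "in_Q n C v \<Longrightarrow> (\<And>i. i \<in> {1..n} \<Longrightarrow> v i = w i) \<Longrightarrow> in_Q n C w"
  unfolding in_Q_def by auto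

lemma in_Q_add:
  assumes "in_Q n C v" and "in_Q n C w"
  shows "in_Q n C (\<lambda>i. v i + w i)"
proof -
  obtain c c' where "\<forall>i\<in>{1..n}. v i = mat_apply n C c i" "\<forall>i\<in>{1..n}. w i = mat_apply n C c' i"
    using assms unfolding in_Q_def by blast
  then have "\<forall>i\<in>{1..n}. v i + w i = mat_apply n C (\<lambda>j. c j + c' j) i"
    by (simp add: sum.distrib algebra_simps)
  then show ?thesis unfolding in_Q_def by (rule exI[of _ "\<lambda>j. c j + c' j"])
qed

lemma in_Q_mult:
  assumes "in_Q n C v"
  shows "in_Q n C (\<lambda>i. x * v i)"
proof -
  obtain c where "\<forall>i\<in>{1..n}. v i = mat_apply n C c i"
    using assms unfolding in_Q_def by blast
  then have "\<forall>i\<in>{1..n}. x * v i = mat_apply n C (\<lambda>j. x * c j) i"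
    by (simp add: sum_distrib_left algebra_simps)
  then show ?thesis unfolding in_Q_def by (rule exI[of _ "\<lambda>j. x * c j"])
qed

lemma in_Q_sum:
  "finite P \<Longrightarrow> (\<And>p. p \<in> P \<Longrightarrow> in_Q n C (v p)) \<Longrightarrow> in_Q n C (\<lambda>i. \<Sum>p\<in>P. v p i)"
proof (induction P rule: finite_induct)
  case empty
  show ?case unfolding in_Q_def by (intro exI[of _ "\<lambda>j. 0"]) simp
next
  case (insert p P)
  then show ?case using in_Q_add[of n C "v p"] by simp
qed

lemma in_Q_ext_path_last_unit:
  assumes d: "1 \<le> d" and m: "1 \<le> m" and "gcd (detm d C) (Delta C d) = 1"
    and small: "\<bar>t\<bar> < \<bar>detm d C + int m * Delta C d\<bar>"
    and "in_Q (d + m) (ext_path C d) (\<lambda>i. if i = d + m then t else 0)"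
  shows "t = 0"
proof -
  obtain g where "\<forall>i\<in>{1..d + m}. mat_apply (d + m) (ext_path C d) g i = (if i = d + m then t else 0)"
    using assms(5) unfolding in_Q_def by force
  from ext_path_eq_last_unit_slope[OF d m this]
  have "(detm d C + int m * Delta C d) dvd t * Delta C d" by simp
  moreover have "coprime (detm d C + int m * Delta C d) (Delta C d)"
    using assms(3) gcd_add_mult[of "Delta C d" "int m" "detm d C"]
    by (simp add: coprime_iff_gcd_eq_1 gcd.commute add.commute)
  ultimately have "(detm d C + int m * Delta C d) dvd t"
    by (simp add: coprime_dvd_mult_left_iff)
  then show "t = 0"
    using small dvd_imp_le_int by force
qed

lemma sum_unit_combination:
  fixes u a :: "nat \<Rightarrow> int"
  assumes "i \<in> {1..n}"
  shows "(\<Sum>p\<in>{1..n}. u p * (- x * (if i = p then 1 else 0) - a p * (if i = n then 1 else 0))) =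
         - x * u i - (if i = n then (\<Sum>p\<in>{1..n}. u p * a p) else 0)"
proof -
  have "(\<Sum>p\<in>{1..n}. u p * (- x * (if i = p then 1 else 0) - a p * (if i = n then 1 else 0))) =
        (\<Sum>p\<in>{1..n}. (if p = i then - x * u p else 0) - (if i = n then u p * a p else 0))"
    by (rule sum.cong) (auto simp: algebra_simps)
  then show ?thesis
    using assms by (cases "i = n") (simp_all add: sum_subtractf)
qed

lemma in_Q_ext_path_eventually_const:
  assumes d: "1 \<le> d" and l: "d \<le> l" "l < n"
    and u0: "\<forall>i>l. u i = 0" and Bs: "\<forall>j\<ge>l. B j = s"
    and u: "\<forall>i\<in>{1..l}. u i = ext_apply C d B i"
  shows "in_Q n (ext_path C d) (\<lambda>i. u i + (if i = n then s else 0))"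
  unfolding in_Q_def
proof (intro exI[of _ B] ballI)
  fix i assume i: "i \<in> {1..n}"
  show "u i + (if i = n then s else 0) = mat_apply n (ext_path C d) B i"
  proof (cases "i < n")
    case True
    then have "mat_apply n (ext_path C d) B i = ext_apply C d B i"
      using d l by (intro ext_path_apply) auto
    then show ?thesis
      using True i u u0 Bs l by (cases "i \<le> l") (auto simp: ext_apply_def)
  next
    case False
    then show ?thesis
      using i l d u0 Bs ext_path_apply_path[OF d, of n n C B] by simp
  qed
qed

text \<open>For large \<open>m\<close> the vector
  \<open>\<Delta> (u + s \<omega>\<^sub>n) + \<Sum>\<^sub>p u\<^sub>p (-\<Delta> \<omega>\<^sub>p - a\<^sub>p \<omega>\<^sub>n) = t \<omega>\<^sub>n\<close>, \<open>t = \<Delta> s - \<Sum>\<^sub>p u\<^sub>p a\<^sub>p\<close>, lies in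
  \<open>Q(X(m))\<close>, \<open>n = d + m\<close>; this forces \<open>det X + m \<Delta>\<close>, which is coprime to \<open>\<Delta>\<close>, to divide \<open>t\<close>.\<close>
lemma sum_a_seq_eq_Delta_mult:
  fixes C :: "nat \<Rightarrow> nat \<Rightarrow> int" and a u B :: "nat \<Rightarrow> int"
  assumes d: "1 \<le> d" and ext: "extensible C d" and aok: "a_seq_ok C d a" and l: "d \<le> l"
    and u0: "\<forall>i>l. u i = 0" and Bs: "\<forall>j\<ge>l. B j = s"
    and u: "\<forall>i\<in>{1..l}. u i = ext_apply C d B i"
  shows "(\<Sum>i\<in>{1..l}. u i * a i) = Delta C d * s"
proof -
  define D De where "D = detm d C" and "De = Delta C d"
  define t where "t = De * s - (\<Sum>i\<in>{1..l}. u i * a i)"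
  define m where "m = l + nat \<bar>t\<bar> + nat \<bar>D\<bar> + 1"
  define n where "n = d + m"
  have DDe: "D \<noteq> 0" "De \<noteq> 0" "gcd D De = 1"
    using ext unfolding extensible_def D_def De_def by auto
  have m: "1 \<le> m" "l < n" unfolding m_def n_def by auto
  have "int m * 1 \<le> int m * \<bar>De\<bar>"
    using DDe(2) by (intro mult_left_mono) auto
  then have "int m \<le> \<bar>int m * De\<bar>"
    by (simp add: abs_mult)
  then have small: "\<bar>t\<bar> < \<bar>D + int m * De\<bar>" unfolding m_def by linarith
  have QB: "in_Q n (ext_path C d) (\<lambda>i. u i + (if i = n then s else 0))"
    using in_Q_ext_path_eventually_const[OF d l m(2) u0 Bs u] .
  have "detm n (ext_path C d) \<noteq> 0"
    using ext_path_detm_nonzero[OF d m(1)] DDe small unfolding n_def D_def De_def by fastforce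
  then have "in_Q n (ext_path C d) (\<lambda>i. - De * (if i = p then 1 else 0) - a p * (if i = n then 1 else 0))"
    if "p \<in> {1..n}" for p
    using aok that unfolding a_seq_ok_def n_def De_def by blast
  then have QS: "in_Q n (ext_path C d)
      (\<lambda>i. \<Sum>p\<in>{1..n}. u p * (- De * (if i = p then 1 else 0) - a p * (if i = n then 1 else 0)))"
    by (intro in_Q_sum in_Q_mult) auto
  have "(\<Sum>p\<in>{1..n}. u p * a p) = (\<Sum>p\<in>{1..l}. u p * a p)"
    using u0 m by (intro sum.mono_neutral_right) auto
  then have "De * (u i + (if i = n then s else 0)) +
        (\<Sum>p\<in>{1..n}. u p * (- De * (if i = p then 1 else 0) - a p * (if i = n then 1 else 0))) =
        (if i = n then t else 0)" if "i \<in> {1..n}" for i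
    unfolding sum_unit_combination[OF that] t_def by (simp add: algebra_simps)
  then have "in_Q n (ext_path C d) (\<lambda>i. if i = n then t else 0)"
    by (intro in_Q_cong[OF in_Q_add[OF in_Q_mult[OF QB, of De] QS]]) simp
  then have "t = 0"
    using in_Q_ext_path_last_unit[OF d m(1)] DDe small unfolding n_def D_def De_def by metis
  then show ?thesis unfolding t_def De_def by simp
qed

section \<open>Nondegeneracy of Z_k\<close>

lemma abs_lt_imp_add_mult_nonzero:
  fixes x y :: int
  assumes "\<bar>x\<bar> < int k" and "y \<noteq> 0"
  shows "x + int k * y \<noteq> 0"
proof
  assume "x + int k * y = 0"
  then have "\<bar>x\<bar> = int k * \<bar>y\<bar>" by (simp add: abs_mult eq_neg_iff_add_eq_0[symmetric])
  moreover have "int k * 1 \<le> int k * \<bar>y\<bar>" using assms(2) by (intro mult_left_mono) auto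
  ultimately show False using assms(1) by simp
qed

lemma Zmat_kernel_equations:
  assumes d1: "1 \<le> d1" and d2: "1 \<le> d2"
    and h: "\<forall>i\<in>{1..d1 + d2 + k}. mat_apply (d1 + d2 + k) (Zmat C1 d1 C2 d2 k) g i = 0"
  shows "\<forall>i\<in>{1..d1}. mat_apply d1 C1 g i = (if i = d1 then g (d1 + 1) else 0)"
    and "\<forall>i\<in>{1..d2}. mat_apply d2 C2 (\<lambda>j. g (d1 + d2 + k + 1 - j)) i =
                     (if i = d2 then g (d1 + k) else 0)"
    and "\<forall>j\<le>k + 1. g (d1 + j) = g d1 + int j * (g (d1 + 1) - g d1)"
proof -
  let ?n = "d1 + d2 + k"
  have left: "ext_apply C1 d1 g i = 0" if "i \<in> {1..d1 + k}" for i
    using h that Zmat_apply_left[OF d1 d2, of i k C1 C2 g] by auto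
  show "\<forall>i\<in>{1..d1}. mat_apply d1 C1 g i = (if i = d1 then g (d1 + 1) else 0)"
  proof
    fix i assume "i \<in> {1..d1}"
    then show "mat_apply d1 C1 g i = (if i = d1 then g (d1 + 1) else 0)"
      using left[of i] by (auto simp: ext_apply_def)
  qed
  have right: "ext_apply C2 d2 (\<lambda>j. g (?n + 1 - j)) i = 0" if "i \<in> {1..d2 + k}" for i
  proof -
    have "?n + 1 - i \<in> {1..?n}" using that d1 by auto
    then show ?thesis using h Zmat_apply_right[OF d1 d2 that, of C1 C2 g] by auto
  qed
  show "\<forall>i\<in>{1..d2}. mat_apply d2 C2 (\<lambda>j. g (?n + 1 - j)) i = (if i = d2 then g (d1 + k) else 0)"
  proof
    fix i assume "i \<in> {1..d2}"
    then show "mat_apply d2 C2 (\<lambda>j. g (?n + 1 - j)) i = (if i = d2 then g (d1 + k) else 0)"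
      using right[of i] by (auto simp: ext_apply_def)
  qed
  have "2 * g i - g (i - 1) - g (i + 1) = 0" if "d1 < i" "i < d1 + k + 1" for i
    using left[of i] that by (simp add: ext_apply_def)
  then show "\<forall>j\<le>k + 1. g (d1 + j) = g d1 + int j * (g (d1 + 1) - g d1)"
    using zero_second_diff_imp_linear[of d1 "d1 + k + 1" g] by simp
qed

text \<open>Cramer's rule on both arms expresses the end values of the (linear) profile of \<open>g\<close>
  along the path through its slope \<open>\<beta>\<close>; eliminating them leaves
  \<open>\<beta> (det X\<^sub>1(-1) \<Delta>\<^sub>2 + det X\<^sub>2 \<Delta>\<^sub>1 + k \<Delta>\<^sub>1 \<Delta>\<^sub>2) = 0\<close>, whose second factor is nonzero for large \<open>k\<close>.\<close>
lemma Zmat_kernel_path_zero: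
  assumes d1: "1 \<le> d1" and d2: "1 \<le> d2" and e1: "extensible C1 d1" and e2: "extensible C2 d2"
    and k: "\<bar>detm (d1 - 1) C1 * Delta C2 d2 + detm d2 C2 * Delta C1 d1\<bar> < int k"
    and h: "\<forall>i\<in>{1..d1 + d2 + k}. mat_apply (d1 + d2 + k) (Zmat C1 d1 C2 d2 k) g i = 0"
  shows "\<forall>j\<le>k + 1. g (d1 + j) = 0"
proof -
  note eqs = Zmat_kernel_equations[OF d1 d2 h]
  define \<beta> where "\<beta> = g (d1 + 1) - g d1"
  have path: "g (d1 + j) = g d1 + int j * \<beta>" if "j \<le> k + 1" for j
    using eqs(3) that unfolding \<beta>_def by simp
  have "g d1 * detm d1 C1 = g (d1 + 1) * detm (d1 - 1) C1"
    by (rule cramer_last_coordinate[OF d1 eqs(1)])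
  then have cr1: "g d1 * Delta C1 d1 = \<beta> * detm (d1 - 1) C1"
    unfolding \<beta>_def Delta_def by (simp add: algebra_simps)
  have "g (d1 + k + 1) * detm d2 C2 = g (d1 + k) * detm (d2 - 1) C2"
    using cramer_last_coordinate[OF d2 eqs(2)] d2 by (simp add: add.commute add.left_commute)
  then have cr2: "(g d1 + int k * \<beta>) * Delta C2 d2 + \<beta> * detm d2 C2 = 0"
    using path[of k] path[of "k + 1"] unfolding Delta_def by (simp add: algebra_simps)
  have "\<beta> * (detm (d1 - 1) C1 * Delta C2 d2 + detm d2 C2 * Delta C1 d1 + int k * (Delta C1 d1 * Delta C2 d2)) =
        Delta C1 d1 * ((g d1 + int k * \<beta>) * Delta C2 d2 + \<beta> * detm d2 C2)
        - Delta C2 d2 * (g d1 * Delta C1 d1 - \<beta> * detm (d1 - 1) C1)"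
    by (simp add: algebra_simps)
  also have "\<dots> = 0" using cr1 cr2 by simp
  finally have "\<beta> = 0"
    using abs_lt_imp_add_mult_nonzero[OF k] e1 e2 unfolding extensible_def by auto
  moreover from this have "g d1 = 0" using cr1 e1 unfolding extensible_def by simp
  ultimately show ?thesis using path by simp
qed

lemma Zmat_kernel_trivial:
  assumes d1: "1 \<le> d1" and d2: "1 \<le> d2" and e1: "extensible C1 d1" and e2: "extensible C2 d2"
    and k: "\<bar>detm (d1 - 1) C1 * Delta C2 d2 + detm d2 C2 * Delta C1 d1\<bar> < int k"
    and h: "\<forall>i\<in>{1..d1 + d2 + k}. mat_apply (d1 + d2 + k) (Zmat C1 d1 C2 d2 k) g i = 0"
  shows "\<forall>j\<in>{1..d1 + d2 + k}. g j = 0"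
proof -
  let ?n = "d1 + d2 + k"
  note eqs = Zmat_kernel_equations[OF d1 d2 h]
  note path0 = Zmat_kernel_path_zero[OF assms, rule_format]
  have K1: "\<And>h. \<forall>i\<in>{1..d1}. mat_apply d1 C1 h i = 0 \<Longrightarrow> \<forall>j\<in>{1..d1}. h j = 0"
    and K2: "\<And>h. \<forall>i\<in>{1..d2}. mat_apply d2 C2 h i = 0 \<Longrightarrow> \<forall>j\<in>{1..d2}. h j = 0"
    using e1 e2 detm_nonzero_iff_kernel_trivial unfolding extensible_def by blast+
  have left0: "\<forall>j\<in>{1..d1}. g j = 0"
    by (rule K1) (use eqs(1) path0[of 1] in simp)
  have right0: "\<forall>j\<in>{1..d2}. g (?n + 1 - j) = 0"
    by (rule K2) (use eqs(2) path0[of k] in simp)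
  show ?thesis
  proof
    fix j assume j: "j \<in> {1..?n}"
    consider "j \<le> d1" | "d1 < j" "j \<le> d1 + k + 1" | "d1 + k + 1 < j" by linarith
    then show "g j = 0"
    proof cases
      case 3
      then have "?n + 1 - j \<in> {1..d2}" "?n + 1 - (?n + 1 - j) = j" using j by auto
      then show ?thesis using right0 by metis
    qed (use left0 j path0[of "j - d1"] in auto)
  qed
qed

section \<open>Coefficient vectors in the definition of the order\<close>

text \<open>The coefficient vector of \<open>\<lambda>\<^sub>1\<^sup>(\<^sup>k\<^sup>) - \<lambda>\<^sub>2\<^sup>(\<^sup>k\<^sup>)\<close> in \<open>succeq_def\<close>.\<close>
definition coeff_vec :: "nat \<Rightarrow> nat \<Rightarrow> nat \<Rightarrow> nat \<Rightarrow> nat \<Rightarrow> (nat \<Rightarrow> int) \<Rightarrow> (nat \<Rightarrow> int) \<Rightarrow> int \<Rightarrow> nat \<Rightarrow> int" where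
  "coeff_vec d1 d2 k l r b c s j =
     (if j \<le> l - 1 then b j else if d1 + d2 + k + 1 - j \<le> r - 1 then c (d1 + d2 + k + 1 - j) else s)"

definition half_coeff_vec :: "nat \<Rightarrow> (nat \<Rightarrow> int) \<Rightarrow> int \<Rightarrow> nat \<Rightarrow> int" where
  "half_coeff_vec l b s j = (if j \<le> l - 1 then b j else s)"

definition supported_in :: "nat \<Rightarrow> nat \<Rightarrow> (nat \<Rightarrow> int) \<times> (nat \<Rightarrow> int) \<Rightarrow> bool" where
  "supported_in l r \<gamma> \<longleftrightarrow> (\<forall>i>l. fst \<gamma> i = 0) \<and> (\<forall>j>r. snd \<gamma> j = 0)"

lemma ell_less_imp_zero:
  assumes "finite {i. x i \<noteq> 0}" and "ell x < i"
  shows "x i = 0"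
proof (rule ccontr)
  assume "x i \<noteq> 0"
  then have "i \<le> ell x"
    unfolding ell_def using assms(1) by (intro Max_ge) auto
  with assms(2) show False by simp
qed

lemma ell_le:
  assumes "\<forall>i>L. x i = 0"
  shows "ell x \<le> L"
proof -
  have "finite (insert 0 {i. x i \<noteq> 0})"
    by (rule finite_subset[of _ "{0..L}"]) (use assms in \<open>auto simp: not_less[symmetric]\<close>)
  then show ?thesis
    unfolding ell_def using assms by (subst Max_le_iff) (auto simp: not_less[symmetric])
qed

lemma H2plus_supported_in:
  assumes "\<gamma> \<in> H2plus" "ls d1 \<gamma> \<le> l" "rs d2 \<gamma> \<le> r"
  shows "supported_in l r \<gamma>"
proof -
  have fin: "finite {i. fst \<gamma> i \<noteq> 0}" "finite {i. snd \<gamma> i \<noteq> 0}"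
    using assms(1) unfolding H2plus_def H1plus_def by auto
  have "ell (fst \<gamma>) \<le> l" "ell (snd \<gamma>) \<le> r"
    using assms(2,3) unfolding ls_def rs_def by auto
  then show ?thesis
    unfolding supported_in_def using ell_less_imp_zero[OF fin(1)] ell_less_imp_zero[OF fin(2)] by auto
qed

lemma supported_in_imp_ls_rs_le:
  "supported_in l r \<gamma> \<Longrightarrow> d1 \<le> l \<Longrightarrow> d2 \<le> r \<Longrightarrow> ls d1 \<gamma> \<le> l \<and> rs d2 \<gamma> \<le> r"
  unfolding supported_in_def ls_def rs_def by (auto intro: ell_le)

lemma lift_nonneg: "\<gamma> \<in> H2plus \<Longrightarrow> 0 \<le> lift d1 d2 k \<gamma> i"
  unfolding lift_def H2plus_def H1plus_def by (cases \<gamma>) auto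

lemma sum_upto_ell:
  assumes "finite {i. x i \<noteq> 0}" "ell x \<le> L"
  shows "(\<Sum>i\<in>{1..ell x}. x i * a i) = (\<Sum>i\<in>{1..L}. x i * a i)"
  by (rule sum.mono_neutral_left) (use assms ell_less_imp_zero[OF assms(1)] in auto)

lemma gnorm_diff:
  assumes "\<rho> \<in> H2plus" "\<sigma> \<in> H2plus"
    and "max (ls d1 \<rho>) (ls d1 \<sigma>) \<le> l" "max (rs d2 \<rho>) (rs d2 \<sigma>) \<le> r"
  shows "gnorm C1 d1 C2 d2 a1 a2 \<rho> - gnorm C1 d1 C2 d2 a1 a2 \<sigma> =
         Delta C2 d2 * (\<Sum>i\<in>{1..l}. (fst \<rho> i - fst \<sigma> i) * a1 i)
         - Delta C1 d1 * (\<Sum>i\<in>{1..r}. (snd \<rho> i - snd \<sigma> i) * a2 i)"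
proof -
  have fin: "finite {i. fst \<rho> i \<noteq> 0}" "finite {i. fst \<sigma> i \<noteq> 0}"
    "finite {i. snd \<rho> i \<noteq> 0}" "finite {i. snd \<sigma> i \<noteq> 0}"
    using assms(1,2) unfolding H2plus_def H1plus_def by auto
  have ell: "ell (fst \<rho>) \<le> l" "ell (fst \<sigma>) \<le> l" "ell (snd \<rho>) \<le> r" "ell (snd \<sigma>) \<le> r"
    using assms(3,4) unfolding ls_def rs_def by auto
  show ?thesis
    unfolding gnorm_def sum_upto_ell[OF fin(1) ell(1)] sum_upto_ell[OF fin(2) ell(2)]
      sum_upto_ell[OF fin(3) ell(3)] sum_upto_ell[OF fin(4) ell(4)]
    by (simp add: algebra_simps sum_subtractf)
qed

lemma coeff_vec_nonneg:
  "\<forall>i\<in>{1..l - 1}. 0 \<le> b i \<Longrightarrow> \<forall>j\<in>{1..r - 1}. 0 \<le> c j \<Longrightarrow> 0 \<le> s \<Longrightarrow> j \<in> {1..d1 + d2 + k} \<Longrightarrow>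
   0 \<le> coeff_vec d1 d2 k l r b c s j"
  unfolding coeff_vec_def by auto

definition succeq_coeffs ::
  "(nat \<Rightarrow> nat \<Rightarrow> int) \<Rightarrow> nat \<Rightarrow> (nat \<Rightarrow> nat \<Rightarrow> int) \<Rightarrow> nat \<Rightarrow> nat \<Rightarrow> nat
     \<Rightarrow> (nat \<Rightarrow> int) \<times> (nat \<Rightarrow> int) \<Rightarrow> (nat \<Rightarrow> int) \<times> (nat \<Rightarrow> int) \<Rightarrow> (nat \<Rightarrow> int) \<Rightarrow> (nat \<Rightarrow> int) \<Rightarrow> int \<Rightarrow> bool"
where
  "succeq_coeffs C1 d1 C2 d2 l r \<rho> \<sigma> b c s \<longleftrightarrow>
     (\<forall>i\<in>{1..l - 1}. 0 \<le> b i) \<and> (\<forall>j\<in>{1..r - 1}. 0 \<le> c j) \<and> 0 \<le> s \<and>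
     (\<forall>k\<ge>l + r - d1 - d2. \<forall>i\<in>{1..d1 + d2 + k}.
        lift d1 d2 k \<rho> i - lift d1 d2 k \<sigma> i =
        mat_apply (d1 + d2 + k) (Zmat C1 d1 C2 d2 k) (coeff_vec d1 d2 k l r b c s) i)"

lemma succeq_iff:
  "succeq C1 d1 C2 d2 a1 a2 \<rho> \<sigma> \<longleftrightarrow>
     \<rho> \<in> H2plus \<and> \<sigma> \<in> H2plus \<and> gnorm C1 d1 C2 d2 a1 a2 \<rho> = gnorm C1 d1 C2 d2 a1 a2 \<sigma> \<and>
     (\<exists>b c s. succeq_coeffs C1 d1 C2 d2 (max (ls d1 \<rho>) (ls d1 \<sigma>)) (max (rs d2 \<rho>) (rs d2 \<sigma>))
                             \<rho> \<sigma> b c s)"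
  unfolding succeq_def succeq_coeffs_def coeff_vec_def Let_def by simp

locale coeff_layout =
  fixes d1 d2 k l r :: nat
  assumes d1: "1 \<le> d1" and d2: "1 \<le> d2" and l: "d1 \<le> l" and r: "d2 \<le> r"
    and lr: "l + r \<le> d1 + d2 + k"
begin

lemma coeff_vec_left: "j \<le> l + 1 \<Longrightarrow> coeff_vec d1 d2 k l r b c s j = half_coeff_vec l b s j"
  using lr r d2 unfolding coeff_vec_def half_coeff_vec_def by auto

lemma coeff_vec_mid: "l \<le> j \<Longrightarrow> j \<le> d1 + d2 + k + 1 - r \<Longrightarrow> coeff_vec d1 d2 k l r b c s j = s"
  using lr r d2 l d1 unfolding coeff_vec_def by auto

lemma coeff_vec_right:
  "j \<le> r + 1 \<Longrightarrow> coeff_vec d1 d2 k l r b c s (d1 + d2 + k + 1 - j) = half_coeff_vec r c s j"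
  using lr l d1 d2 r unfolding coeff_vec_def half_coeff_vec_def by auto

lemma Zmat_apply_coeff_vec_left:
  assumes "i \<in> {1..l}"
  shows "mat_apply (d1 + d2 + k) (Zmat C1 d1 C2 d2 k) (coeff_vec d1 d2 k l r b c s) i =
         ext_apply C1 d1 (half_coeff_vec l b s) i"
proof -
  have "mat_apply (d1 + d2 + k) (Zmat C1 d1 C2 d2 k) (coeff_vec d1 d2 k l r b c s) i =
        ext_apply C1 d1 (coeff_vec d1 d2 k l r b c s) i"
    using assms lr r by (intro Zmat_apply_left[OF d1 d2]) auto
  also have "\<dots> = ext_apply C1 d1 (half_coeff_vec l b s) i"
    using assms l by (intro ext_apply_cong coeff_vec_left) auto
  finally show ?thesis .
qed

lemma Zmat_apply_coeff_vec_right: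
  assumes "i \<in> {1..r}"
  shows "mat_apply (d1 + d2 + k) (Zmat C1 d1 C2 d2 k) (coeff_vec d1 d2 k l r b c s) (d1 + d2 + k + 1 - i) =
         ext_apply C2 d2 (half_coeff_vec r c s) i"
proof -
  have "i \<in> {1..d2 + k}" using assms lr l by auto
  then have "mat_apply (d1 + d2 + k) (Zmat C1 d1 C2 d2 k) (coeff_vec d1 d2 k l r b c s) (d1 + d2 + k + 1 - i) =
        ext_apply C2 d2 (\<lambda>j. coeff_vec d1 d2 k l r b c s (d1 + d2 + k + 1 - j)) i"
    by (rule Zmat_apply_right[OF d1 d2])
  also have "\<dots> = ext_apply C2 d2 (half_coeff_vec r c s) i"
    using assms r by (intro ext_apply_cong coeff_vec_right) auto
  finally show ?thesis .
qed

lemma Zmat_apply_coeff_vec_mid: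
  assumes "l < i" "i < d1 + d2 + k + 1 - r"
  shows "mat_apply (d1 + d2 + k) (Zmat C1 d1 C2 d2 k) (coeff_vec d1 d2 k l r b c s) i = 0"
proof -
  have "mat_apply (d1 + d2 + k) (Zmat C1 d1 C2 d2 k) (coeff_vec d1 d2 k l r b c s) i =
        ext_apply C1 d1 (coeff_vec d1 d2 k l r b c s) i"
    using assms r d2 by (intro Zmat_apply_left[OF d1 d2]) auto
  then show ?thesis
    using assms l by (simp add: ext_apply_def coeff_vec_mid)
qed

lemma lift_left: "supported_in l r \<gamma> \<Longrightarrow> i \<in> {1..l} \<Longrightarrow> lift d1 d2 k \<gamma> i = fst \<gamma> i"
  using lr d2 r unfolding supported_in_def lift_def by auto

lemma lift_right:
  "supported_in l r \<gamma> \<Longrightarrow> i \<in> {1..r} \<Longrightarrow> lift d1 d2 k \<gamma> (d1 + d2 + k + 1 - i) = snd \<gamma> i"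
  using lr d1 l unfolding supported_in_def lift_def by auto

lemma lift_mid: "supported_in l r \<gamma> \<Longrightarrow> l < i \<Longrightarrow> i < d1 + d2 + k + 1 - r \<Longrightarrow> lift d1 d2 k \<gamma> i = 0"
  unfolding supported_in_def lift_def by auto

text \<open>The two equations on the right do not involve \<open>k\<close>.\<close>
lemma Zmat_coeff_vec_eq_iff:
  assumes "supported_in l r \<rho>" "supported_in l r \<sigma>"
  shows "(\<forall>i\<in>{1..d1 + d2 + k}. lift d1 d2 k \<rho> i - lift d1 d2 k \<sigma> i =
            mat_apply (d1 + d2 + k) (Zmat C1 d1 C2 d2 k) (coeff_vec d1 d2 k l r b c s) i) \<longleftrightarrow>
         (\<forall>i\<in>{1..l}. fst \<rho> i - fst \<sigma> i = ext_apply C1 d1 (half_coeff_vec l b s) i) \<and>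
         (\<forall>i\<in>{1..r}. snd \<rho> i - snd \<sigma> i = ext_apply C2 d2 (half_coeff_vec r c s) i)"
    (is "?Z \<longleftrightarrow> ?L \<and> ?R")
proof (intro iffI conjI ballI)
  fix i assume Z: ?Z and i: "i \<in> {1..l}"
  then have "i \<in> {1..d1 + d2 + k}" using lr by auto
  with Z have "lift d1 d2 k \<rho> i - lift d1 d2 k \<sigma> i =
      mat_apply (d1 + d2 + k) (Zmat C1 d1 C2 d2 k) (coeff_vec d1 d2 k l r b c s) i" by blast
  then show "fst \<rho> i - fst \<sigma> i = ext_apply C1 d1 (half_coeff_vec l b s) i"
    using lift_left[OF assms(1) i] lift_left[OF assms(2) i] Zmat_apply_coeff_vec_left[OF i] by simp
next
  fix i assume Z: ?Z and i: "i \<in> {1..r}"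
  then have "d1 + d2 + k + 1 - i \<in> {1..d1 + d2 + k}" using lr l d1 by auto
  with Z have "lift d1 d2 k \<rho> (d1 + d2 + k + 1 - i) - lift d1 d2 k \<sigma> (d1 + d2 + k + 1 - i) =
      mat_apply (d1 + d2 + k) (Zmat C1 d1 C2 d2 k) (coeff_vec d1 d2 k l r b c s) (d1 + d2 + k + 1 - i)"
    by blast
  then show "snd \<rho> i - snd \<sigma> i = ext_apply C2 d2 (half_coeff_vec r c s) i"
    using lift_right[OF assms(1) i] lift_right[OF assms(2) i] Zmat_apply_coeff_vec_right[OF i] by simp
next
  fix i assume LR: "?L \<and> ?R" and i: "i \<in> {1..d1 + d2 + k}"
  consider "i \<le> l" | "l < i" "i < d1 + d2 + k + 1 - r" | "d1 + d2 + k + 1 - r \<le> i" by linarith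
  then show "lift d1 d2 k \<rho> i - lift d1 d2 k \<sigma> i =
             mat_apply (d1 + d2 + k) (Zmat C1 d1 C2 d2 k) (coeff_vec d1 d2 k l r b c s) i"
  proof cases
    case 1
    with i have i': "i \<in> {1..l}" by simp
    show ?thesis
      using LR i' lift_left[OF assms(1) i'] lift_left[OF assms(2) i'] Zmat_apply_coeff_vec_left[OF i']
      by simp
  next
    case 2
    then show ?thesis
      using lift_mid[OF assms(1)] lift_mid[OF assms(2)] Zmat_apply_coeff_vec_mid by simp
  next
    case 3
    define i' where "i' = d1 + d2 + k + 1 - i"
    have i': "i' \<in> {1..r}" and i_eq: "i = d1 + d2 + k + 1 - i'" using i 3 unfolding i'_def by auto
    show ?thesis
      unfolding i_eq
      using LR i' lift_right[OF assms(1) i'] lift_right[OF assms(2) i'] Zmat_apply_coeff_vec_right[OF i']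
      by simp
  qed
qed

text \<open>A solution \<open>E\<close> of \<open>\<rho>\<^sup>(\<^sup>k\<^sup>) - \<sigma>\<^sup>(\<^sup>k\<^sup>) = Z\<^sub>k E\<close> is linear between the supports, since the left hand side
  vanishes there; one flat step makes it constant, i.e. of the shape of \<open>coeff_vec\<close>.\<close>
lemma Zmat_solution_eq_coeff_vec:
  assumes supp: "supported_in l r \<rho>" "supported_in l r \<sigma>"
    and eq: "\<forall>i\<in>{1..d1 + d2 + k}. lift d1 d2 k \<rho> i - lift d1 d2 k \<sigma> i =
                                   mat_apply (d1 + d2 + k) (Zmat C1 d1 C2 d2 k) E i"
    and q: "l \<le> q" "q < d1 + d2 + k + 1 - r" "E q = E (q + 1)"
  shows "\<forall>i\<in>{1..d1 + d2 + k}. lift d1 d2 k \<rho> i - lift d1 d2 k \<sigma> i =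
           mat_apply (d1 + d2 + k) (Zmat C1 d1 C2 d2 k)
             (coeff_vec d1 d2 k l r E (\<lambda>j. E (d1 + d2 + k + 1 - j)) (E l)) i"
proof -
  let ?n = "d1 + d2 + k"
  have "2 * E i - E (i - 1) - E (i + 1) = 0" if "l < i" "i < ?n + 1 - r" for i
  proof -
    have i: "i \<in> {1..?n}" "i \<le> d1 + k" "d1 < i" using that l r d2 by auto
    then have "mat_apply ?n (Zmat C1 d1 C2 d2 k) E i = 0"
      using eq[rule_format, OF i(1)] lift_mid[OF supp(1) that] lift_mid[OF supp(2) that] by simp
    then show ?thesis
      using Zmat_apply_left[OF d1 d2 i(2)] i by (simp add: ext_apply_def)
  qed
  then have const: "E p = E l" if "l \<le> p" "p \<le> ?n + 1 - r" for p
    using zero_second_diff_imp_const[of l "?n + 1 - r" E q p] q that by blast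
  have "coeff_vec d1 d2 k l r E (\<lambda>j. E (?n + 1 - j)) (E l) j = E j" if "j \<in> {1..?n}" for j
    using that const[of j] l d1 unfolding coeff_vec_def by auto
  then show ?thesis
    using eq by (auto intro!: sum.cong)
qed

end

locale extensible_setting =
  fixes C1 C2 :: "nat \<Rightarrow> nat \<Rightarrow> int" and d1 d2 :: nat and a1 a2 :: "nat \<Rightarrow> int"
  assumes d1: "1 \<le> d1" and d2: "1 \<le> d2" and pair: "extensible_pair C1 d1 C2 d2"
    and a1: "a_seq_ok C1 d1 a1" and a2: "a_seq_ok C2 d2 a2"
begin

lemma extensible1: "extensible C1 d1" and extensible2: "extensible C2 d2"
  using pair unfolding extensible_pair_def by auto

lemma succeq_of_half_eqs:
  assumes \<rho>: "\<rho> \<in> H2plus" and \<sigma>: "\<sigma> \<in> H2plus"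
    and l: "l = max (ls d1 \<rho>) (ls d1 \<sigma>)" and r: "r = max (rs d2 \<rho>) (rs d2 \<sigma>)"
    and nonneg: "\<forall>i\<in>{1..l - 1}. 0 \<le> b i" "\<forall>j\<in>{1..r - 1}. 0 \<le> c j" "0 \<le> s"
    and L: "\<forall>i\<in>{1..l}. fst \<rho> i - fst \<sigma> i = ext_apply C1 d1 (half_coeff_vec l b s) i"
    and R: "\<forall>i\<in>{1..r}. snd \<rho> i - snd \<sigma> i = ext_apply C2 d2 (half_coeff_vec r c s) i"
  shows "succeq C1 d1 C2 d2 a1 a2 \<rho> \<sigma>"
proof -
  have lr: "d1 \<le> l" "d2 \<le> r" using l r by (auto simp: ls_def rs_def)
  have supp: "supported_in l r \<rho>" "supported_in l r \<sigma>"
    using H2plus_supported_in[OF \<rho>, of d1 l d2 r] H2plus_supported_in[OF \<sigma>, of d1 l d2 r] l r by auto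
  have "(\<Sum>i\<in>{1..l}. (fst \<rho> i - fst \<sigma> i) * a1 i) = Delta C1 d1 * s"
    by (rule sum_a_seq_eq_Delta_mult[OF d1 extensible1 a1 lr(1), where B = "half_coeff_vec l b s"])
       (use supp L lr d1 in \<open>auto simp: supported_in_def half_coeff_vec_def\<close>)
  moreover have "(\<Sum>i\<in>{1..r}. (snd \<rho> i - snd \<sigma> i) * a2 i) = Delta C2 d2 * s"
    by (rule sum_a_seq_eq_Delta_mult[OF d2 extensible2 a2 lr(2), where B = "half_coeff_vec r c s"])
       (use supp R lr d2 in \<open>auto simp: supported_in_def half_coeff_vec_def\<close>)
  ultimately have "gnorm C1 d1 C2 d2 a1 a2 \<rho> = gnorm C1 d1 C2 d2 a1 a2 \<sigma>"
    using gnorm_diff[OF \<rho> \<sigma>, of d1 l d2 r C1 C2 a1 a2] l r by simp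
  moreover have Zeqs: "\<forall>i\<in>{1..d1 + d2 + k}. lift d1 d2 k \<rho> i - lift d1 d2 k \<sigma> i =
      mat_apply (d1 + d2 + k) (Zmat C1 d1 C2 d2 k) (coeff_vec d1 d2 k l r b c s) i"
    if "l + r - d1 - d2 \<le> k" for k
  proof -
    interpret coeff_layout d1 d2 k l r
      using d1 d2 lr that by unfold_locales auto
    show ?thesis by (rule Zmat_coeff_vec_eq_iff[OF supp, THEN iffD2, OF conjI[OF L R]])
  qed
  then have "succeq_coeffs C1 d1 C2 d2 l r \<rho> \<sigma> b c s"
    using nonneg unfolding succeq_coeffs_def by simp
  ultimately show ?thesis
    unfolding succeq_iff l[symmetric] r[symmetric] using \<rho> \<sigma> by blast
qed

lemma succeq_of_flat_solution:
  assumes \<rho>: "\<rho> \<in> H2plus" and \<sigma>: "\<sigma> \<in> H2plus"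
    and l_eq: "l = max (ls d1 \<rho>) (ls d1 \<sigma>)" and r_eq: "r = max (rs d2 \<rho>) (rs d2 \<sigma>)"
    and lr: "l + r \<le> d1 + d2 + k"
    and E: "\<forall>j\<in>{1..d1 + d2 + k}. 0 \<le> E j"
    and eq: "\<forall>i\<in>{1..d1 + d2 + k}. lift d1 d2 k \<rho> i - lift d1 d2 k \<sigma> i =
                                   mat_apply (d1 + d2 + k) (Zmat C1 d1 C2 d2 k) E i"
    and q: "l \<le> q" "q < d1 + d2 + k + 1 - r" "E q = E (q + 1)"
  shows "succeq C1 d1 C2 d2 a1 a2 \<rho> \<sigma>"
proof -
  let ?n = "d1 + d2 + k"
  have ld: "d1 \<le> l" "d2 \<le> r" using l_eq r_eq by (auto simp: ls_def rs_def)
  have supp: "supported_in l r \<rho>" "supported_in l r \<sigma>"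
    using H2plus_supported_in[OF \<rho>, of d1 l d2 r] H2plus_supported_in[OF \<sigma>, of d1 l d2 r] l_eq r_eq
    by auto
  interpret coeff_layout d1 d2 k l r
    using d1 d2 ld lr by unfold_locales
  note LR = Zmat_coeff_vec_eq_iff[OF supp, where b = E and c = "\<lambda>j. E (?n + 1 - j)" and s = "E l",
      THEN iffD1, OF Zmat_solution_eq_coeff_vec[OF supp eq q]]
  have "?n + 1 - j \<in> {1..?n}" if "j \<in> {1..r - 1}" for j
    using that lr by auto
  then have "\<forall>i\<in>{1..l - 1}. 0 \<le> E i" "\<forall>j\<in>{1..r - 1}. 0 \<le> E (?n + 1 - j)" "0 \<le> E l"
    using E lr ld d1 by auto
  from succeq_of_half_eqs[OF \<rho> \<sigma> l_eq r_eq this conjunct1[OF LR] conjunct2[OF LR]]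
  show ?thesis .
qed

lemma succeq_imp_nonneg_solution:
  assumes "succeq C1 d1 C2 d2 a1 a2 \<rho> \<sigma>"
    and "max (ls d1 \<rho>) (ls d1 \<sigma>) + max (rs d2 \<rho>) (rs d2 \<sigma>) \<le> d1 + d2 + k"
  obtains E where "\<forall>j\<in>{1..d1 + d2 + k}. 0 \<le> E j"
    and "\<forall>i\<in>{1..d1 + d2 + k}. lift d1 d2 k \<rho> i - lift d1 d2 k \<sigma> i =
                               mat_apply (d1 + d2 + k) (Zmat C1 d1 C2 d2 k) E i"
proof -
  obtain b c s where
    "succeq_coeffs C1 d1 C2 d2 (max (ls d1 \<rho>) (ls d1 \<sigma>)) (max (rs d2 \<rho>) (rs d2 \<sigma>)) \<rho> \<sigma> b c s"
    using assms(1) unfolding succeq_iff by blast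
  then show ?thesis
    using that[of "coeff_vec d1 d2 k (max (ls d1 \<rho>) (ls d1 \<sigma>)) (max (rs d2 \<rho>) (rs d2 \<sigma>)) b c s"]
      assms(2) coeff_vec_nonneg unfolding succeq_coeffs_def by simp
qed

end

section \<open>The interval between two comparable elements\<close>

locale succeq_interval = extensible_setting +
  fixes lam1 lam2 :: "(nat \<Rightarrow> int) \<times> (nat \<Rightarrow> int)" and b0 c0 :: "nat \<Rightarrow> int" and s0 :: int
  assumes lam1: "lam1 \<in> H2plus" and lam2: "lam2 \<in> H2plus"
    and coeffs0: "succeq_coeffs C1 d1 C2 d2 (max (ls d1 lam1) (ls d1 lam2)) (max (rs d2 lam1) (rs d2 lam2))
                    lam1 lam2 b0 c0 s0"
begin

abbreviation "l0 \<equiv> max (ls d1 lam1) (ls d1 lam2)"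
abbreviation "r0 \<equiv> max (rs d2 lam1) (rs d2 lam2)"
abbreviation "F k \<equiv> coeff_vec d1 d2 k l0 r0 b0 c0 s0"

text \<open>Beyond \<open>K0\<close>, \<open>Z\<^sub>k\<close> is nondegenerate and the \<open>s\<^sub>0\<close>-neighbourhoods \<open>LB\<close>, \<open>RB\<close> of the
  supports of \<open>\<lambda>\<^sub>1, \<lambda>\<^sub>2\<close> are disjoint.\<close>
definition "LB = l0 + nat s0"
definition "RB = r0 + nat s0"
definition "K0 = nat \<bar>detm (d1 - 1) C1 * Delta C2 d2 + detm d2 C2 * Delta C1 d1\<bar> + 1 + LB + RB"

lemma l0_r0_ge: "d1 \<le> l0" "d2 \<le> r0"
  unfolding ls_def rs_def by auto

lemma lam_supported: "supported_in l0 r0 lam1" "supported_in l0 r0 lam2"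
  using H2plus_supported_in[OF lam1, of d1 l0 d2 r0] H2plus_supported_in[OF lam2, of d1 l0 d2 r0]
  by auto

lemma LB_RB_less: "K0 \<le> k \<Longrightarrow> LB + RB < d1 + d2 + k"
  unfolding K0_def by simp

lemma coeff_layout_l0_r0: "K0 \<le> k \<Longrightarrow> coeff_layout d1 d2 k l0 r0"
  using d1 d2 l0_r0_ge LB_RB_less[of k] unfolding LB_def RB_def by unfold_locales auto

lemma coeff_layout_LB_RB: "K0 \<le> k \<Longrightarrow> coeff_layout d1 d2 k LB RB"
  using d1 d2 l0_r0_ge LB_RB_less[of k] unfolding LB_def RB_def by unfold_locales auto

lemma F_eq: "l0 + r0 \<le> d1 + d2 + k \<Longrightarrow> \<forall>i\<in>{1..d1 + d2 + k}.
   lift d1 d2 k lam1 i - lift d1 d2 k lam2 i = mat_apply (d1 + d2 + k) (Zmat C1 d1 C2 d2 k) (F k) i"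
  using coeffs0 unfolding succeq_coeffs_def by simp

definition interval_coords :: "nat \<Rightarrow> (nat \<Rightarrow> int) \<Rightarrow> (nat \<Rightarrow> int) \<Rightarrow> (nat \<Rightarrow> int) \<Rightarrow> bool" where
  "interval_coords k \<beta> e e' \<longleftrightarrow>
     (\<forall>j\<in>{1..d1 + d2 + k}. 0 \<le> e j \<and> 0 \<le> e' j) \<and>
     (\<forall>i\<in>{1..d1 + d2 + k}. lift d1 d2 k lam1 i - \<beta> i = mat_apply (d1 + d2 + k) (Zmat C1 d1 C2 d2 k) e i) \<and>
     (\<forall>i\<in>{1..d1 + d2 + k}. \<beta> i - lift d1 d2 k lam2 i = mat_apply (d1 + d2 + k) (Zmat C1 d1 C2 d2 k) e' i)"

lemma Ik_iff:
  "\<beta> \<in> Ik C1 d1 C2 d2 k lam1 lam2 \<longleftrightarrow>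
     (\<forall>i. i \<notin> {1..d1 + d2 + k} \<longrightarrow> \<beta> i = 0) \<and> (\<forall>i\<in>{1..d1 + d2 + k}. 0 \<le> \<beta> i) \<and>
     (\<exists>e e'. interval_coords k \<beta> e e')"
  unfolding Ik_def Let_def in_Qplus_def interval_coords_def by blast

lemma interval_coords_sum:
  assumes k: "K0 \<le> k" and coords: "interval_coords k \<beta> e e'"
  shows "\<forall>j\<in>{1..d1 + d2 + k}. e j + e' j = F k j"
proof -
  have "int k > \<bar>detm (d1 - 1) C1 * Delta C2 d2 + detm d2 C2 * Delta C1 d1\<bar>"
    using k unfolding K0_def by linarith
  moreover have "\<forall>i\<in>{1..d1 + d2 + k}.
      mat_apply (d1 + d2 + k) (Zmat C1 d1 C2 d2 k) (\<lambda>j. e j + e' j - F k j) i = 0"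
  proof
    fix i assume i: "i \<in> {1..d1 + d2 + k}"
    have "l0 + r0 \<le> d1 + d2 + k" using LB_RB_less[OF k] unfolding LB_def RB_def by linarith
    with i have "lift d1 d2 k lam1 i - lift d1 d2 k lam2 i = mat_apply (d1 + d2 + k) (Zmat C1 d1 C2 d2 k) (F k) i"
      using F_eq by blast
    moreover have "lift d1 d2 k lam1 i - \<beta> i = mat_apply (d1 + d2 + k) (Zmat C1 d1 C2 d2 k) e i"
      and "\<beta> i - lift d1 d2 k lam2 i = mat_apply (d1 + d2 + k) (Zmat C1 d1 C2 d2 k) e' i"
      using coords i unfolding interval_coords_def by blast+
    ultimately show "mat_apply (d1 + d2 + k) (Zmat C1 d1 C2 d2 k) (\<lambda>j. e j + e' j - F k j) i = 0"
      unfolding mat_apply_add_diff by simp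
  qed
  ultimately show ?thesis
    using Zmat_kernel_trivial[OF d1 d2 extensible1 extensible2] by fastforce
qed

lemma interval_coords_second_diff:
  assumes k: "K0 \<le> k" and coords: "interval_coords k \<beta> e e'"
    and p: "l0 < p" "p < d1 + d2 + k + 1 - r0"
  shows "e (p - 1) + e (p + 1) - 2 * e p = \<beta> p"
proof -
  interpret coeff_layout d1 d2 k l0 r0 by (rule coeff_layout_l0_r0[OF k])
  have p': "p \<in> {1..d1 + d2 + k}" "p \<le> d1 + k" "d1 < p" using p l0_r0_ge d2 by auto
  then have "lift d1 d2 k lam1 p - \<beta> p = mat_apply (d1 + d2 + k) (Zmat C1 d1 C2 d2 k) e p"
    using coords unfolding interval_coords_def by blast
  then show ?thesis
    using p' lift_mid[OF lam_supported(1) p] Zmat_apply_left[OF d1 d2 p'(2), of C1 C2 e]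
    by (simp add: ext_apply_def)
qed

lemma interval_coords_flat:
  assumes k: "K0 \<le> k" and \<beta>: "\<forall>i\<in>{1..d1 + d2 + k}. 0 \<le> \<beta> i" and coords: "interval_coords k \<beta> e e'"
    and p: "LB \<le> p" "p + 1 + RB \<le> d1 + d2 + k + 1"
  shows "e (p + 1) = e p" and "e' (p + 1) = e' p"
proof -
  interpret coeff_layout d1 d2 k l0 r0 by (rule coeff_layout_l0_r0[OF k])
  have sum: "\<forall>j\<in>{1..d1 + d2 + k}. e j + e' j = F k j" by (rule interval_coords_sum[OF k coords])
  have bounds: "0 \<le> e q \<and> e q \<le> int (nat s0) \<and> e q + e' q = s0"
    if "l0 \<le> q" "q \<le> d1 + d2 + k + 1 - r0" for q
  proof -
    have q: "q \<in> {1..d1 + d2 + k}" using that l0_r0_ge d1 d2 by auto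
    then have "e q + e' q = F k q" using sum by blast
    also have "F k q = s0" by (rule coeff_vec_mid[OF that])
    finally have "e q + e' q = s0" .
    moreover have "0 \<le> e q" "0 \<le> e' q" using coords q unfolding interval_coords_def by blast+
    moreover have "0 \<le> s0" using coeffs0 unfolding succeq_coeffs_def by blast
    ultimately show ?thesis by simp
  qed
  have convex: "0 \<le> e (q - 1) + e (q + 1) - 2 * e q" if "l0 < q" "q < d1 + d2 + k + 1 - r0" for q
  proof -
    have "q \<in> {1..d1 + d2 + k}" using that l0_r0_ge d1 by auto
    then show ?thesis using interval_coords_second_diff[OF k coords that] \<beta> by simp
  qed
  show flat: "e (p + 1) = e p"
  proof (rule convex_bounded_imp_flat[where a = l0 and b = "d1 + d2 + k + 1 - r0" and S = "nat s0"])
    show "0 \<le> e (q - 1) + e (q + 1) - 2 * e q" if "l0 < q" "q < d1 + d2 + k + 1 - r0" for q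
      using convex that by blast
    show "0 \<le> e q \<and> e q \<le> int (nat s0)" if "l0 \<le> q" "q \<le> d1 + d2 + k + 1 - r0" for q
      using bounds that by blast
    show "l0 + nat s0 \<le> p" "p + 1 + nat s0 \<le> d1 + d2 + k + 1 - r0"
      using p unfolding LB_def RB_def by auto
  qed
  have "l0 \<le> p" "p + 1 \<le> d1 + d2 + k + 1 - r0" using p unfolding LB_def RB_def by auto
  then show "e' (p + 1) = e' p"
    using bounds[of p] bounds[of "p + 1"] flat by simp
qed

lemma interval_coords_mid_zero:
  assumes k: "K0 \<le> k" and \<beta>: "\<forall>i\<in>{1..d1 + d2 + k}. 0 \<le> \<beta> i" and coords: "interval_coords k \<beta> e e'"
    and i: "LB < i" "i < d1 + d2 + k + 1 - RB"
  shows "\<beta> i = 0"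
proof -
  have "e (i - 1 + 1) = e (i - 1)"
    using i by (intro interval_coords_flat(1)[OF k \<beta> coords]) auto
  moreover have "e (i + 1) = e i"
    using i by (intro interval_coords_flat(1)[OF k \<beta> coords]) auto
  moreover have "e (i - 1) + e (i + 1) - 2 * e i = \<beta> i"
    using i unfolding LB_def RB_def by (intro interval_coords_second_diff[OF k coords]) auto
  ultimately show ?thesis using i by simp
qed

definition unlift :: "nat \<Rightarrow> (nat \<Rightarrow> int) \<Rightarrow> (nat \<Rightarrow> int) \<times> (nat \<Rightarrow> int)" where
  "unlift k \<beta> = ((\<lambda>i. if 1 \<le> i \<and> i \<le> LB then \<beta> i else 0),
                  (\<lambda>j. if 1 \<le> j \<and> j \<le> RB then \<beta> (d1 + d2 + k + 1 - j) else 0))"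

lemma unlift_in_H2plus:
  assumes "K0 \<le> k" and "\<forall>i\<in>{1..d1 + d2 + k}. 0 \<le> \<beta> i"
  shows "unlift k \<beta> \<in> H2plus"
proof -
  have "d1 + d2 + k + 1 - j \<in> {1..d1 + d2 + k}" if "1 \<le> j" "j \<le> RB" for j
    using that LB_RB_less[OF assms(1)] by auto
  moreover have "i \<in> {1..d1 + d2 + k}" if "1 \<le> i" "i \<le> LB" for i
    using that LB_RB_less[OF assms(1)] by auto
  ultimately show ?thesis
    using assms(2) unfolding unlift_def H2plus_def H1plus_def
    by (auto intro: finite_subset[of _ "{1..LB}"] finite_subset[of _ "{1..RB}"])
qed

lemma unlift_ls_rs: "ls d1 (unlift k \<beta>) \<le> LB \<and> rs d2 (unlift k \<beta>) \<le> RB"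
  using supported_in_imp_ls_rs_le[of LB RB "unlift k \<beta>" d1 d2] l0_r0_ge
  unfolding supported_in_def unlift_def LB_def RB_def by auto

lemma lift_unlift:
  assumes k: "K0 \<le> k" and out: "\<forall>i. i \<notin> {1..d1 + d2 + k} \<longrightarrow> \<beta> i = 0"
    and mid: "\<forall>i. LB < i \<and> i < d1 + d2 + k + 1 - RB \<longrightarrow> \<beta> i = 0"
  shows "lift d1 d2 k (unlift k \<beta>) = \<beta>"
proof
  fix i
  have big: "LB + RB < d1 + d2 + k" using LB_RB_less[OF k] by simp
  consider "i \<notin> {1..d1 + d2 + k}" | "i \<in> {1..d1 + d2 + k}" "i \<le> LB"
    | "LB < i" "i < d1 + d2 + k + 1 - RB" | "i \<in> {1..d1 + d2 + k}" "d1 + d2 + k + 1 - RB \<le> i"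
    by fastforce
  then show "lift d1 d2 k (unlift k \<beta>) i = \<beta> i"
  proof cases
    case 1
    then show ?thesis using out unfolding lift_def by auto
  next
    case 2
    then show ?thesis using big unfolding lift_def unlift_def by auto
  next
    case 3
    then show ?thesis using mid unfolding lift_def unlift_def by auto
  next
    case 4
    then have "d1 + d2 + k + 1 - (d1 + d2 + k + 1 - i) = i" "\<not> i \<le> LB" using big by auto
    then show ?thesis using 4 unfolding lift_def unlift_def by auto
  qed
qed

lemma Ik_imp_unlift:
  assumes k: "K0 \<le> k" and \<beta>: "\<beta> \<in> Ik C1 d1 C2 d2 k lam1 lam2"
  shows "unlift k \<beta> \<in> Iset C1 d1 C2 d2 a1 a2 lam1 lam2" and "lift d1 d2 k (unlift k \<beta>) = \<beta>"
proof -
  obtain e e' where out: "\<forall>i. i \<notin> {1..d1 + d2 + k} \<longrightarrow> \<beta> i = 0"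
    and pos: "\<forall>i\<in>{1..d1 + d2 + k}. 0 \<le> \<beta> i" and coords: "interval_coords k \<beta> e e'"
    using \<beta> unfolding Ik_iff by blast
  show lift_eq: "lift d1 d2 k (unlift k \<beta>) = \<beta>"
    using lift_unlift[OF k out] interval_coords_mid_zero[OF k pos coords] by blast
  define \<gamma> where "\<gamma> = unlift k \<beta>"
  have \<gamma>: "\<gamma> \<in> H2plus" unfolding \<gamma>_def by (rule unlift_in_H2plus[OF k pos])
  have sizes: "max (ls d1 lam1) (ls d1 \<gamma>) \<le> LB" "max (ls d1 \<gamma>) (ls d1 lam2) \<le> LB"
    "max (rs d2 lam1) (rs d2 \<gamma>) \<le> RB" "max (rs d2 \<gamma>) (rs d2 lam2) \<le> RB"
    using unlift_ls_rs[of k \<beta>] unfolding \<gamma>_def LB_def RB_def by auto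
  have big: "LB + 1 + RB \<le> d1 + d2 + k + 1" using LB_RB_less[OF k] by simp
  have flat: "e LB = e (LB + 1)" "e' LB = e' (LB + 1)"
    using interval_coords_flat[OF k pos coords order_refl big] by simp_all
  have "succeq C1 d1 C2 d2 a1 a2 lam1 \<gamma>"
    by (rule succeq_of_flat_solution[OF lam1 \<gamma> refl refl _ _ _ _ _ flat(1)])
       (use sizes big coords lift_eq in \<open>auto simp: interval_coords_def \<gamma>_def\<close>)
  moreover have "succeq C1 d1 C2 d2 a1 a2 \<gamma> lam2"
    by (rule succeq_of_flat_solution[OF \<gamma> lam2 refl refl _ _ _ _ _ flat(2)])
       (use sizes big coords lift_eq in \<open>auto simp: interval_coords_def \<gamma>_def\<close>)
  ultimately show "unlift k \<beta> \<in> Iset C1 d1 C2 d2 a1 a2 lam1 lam2"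
    using \<gamma> unfolding Iset_def \<gamma>_def by simp
qed

lemma Iset_lift_in_Ik:
  assumes \<gamma>: "\<gamma> \<in> Iset C1 d1 C2 d2 a1 a2 lam1 lam2"
    and k: "max (ls d1 \<gamma>) l0 + max (rs d2 \<gamma>) r0 \<le> d1 + d2 + k"
  shows "lift d1 d2 k \<gamma> \<in> Ik C1 d1 C2 d2 k lam1 lam2"
proof -
  have H: "\<gamma> \<in> H2plus" and s1: "succeq C1 d1 C2 d2 a1 a2 lam1 \<gamma>" and s2: "succeq C1 d1 C2 d2 a1 a2 \<gamma> lam2"
    using \<gamma> unfolding Iset_def by auto
  have sizes: "max (ls d1 lam1) (ls d1 \<gamma>) + max (rs d2 lam1) (rs d2 \<gamma>) \<le> d1 + d2 + k"
    "max (ls d1 \<gamma>) (ls d1 lam2) + max (rs d2 \<gamma>) (rs d2 lam2) \<le> d1 + d2 + k"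
    using k by auto
  obtain e where "\<forall>j\<in>{1..d1 + d2 + k}. 0 \<le> e j"
    "\<forall>i\<in>{1..d1 + d2 + k}. lift d1 d2 k lam1 i - lift d1 d2 k \<gamma> i =
                           mat_apply (d1 + d2 + k) (Zmat C1 d1 C2 d2 k) e i"
    by (rule succeq_imp_nonneg_solution[OF s1 sizes(1)])
  moreover obtain e' where "\<forall>j\<in>{1..d1 + d2 + k}. 0 \<le> e' j"
    "\<forall>i\<in>{1..d1 + d2 + k}. lift d1 d2 k \<gamma> i - lift d1 d2 k lam2 i =
                           mat_apply (d1 + d2 + k) (Zmat C1 d1 C2 d2 k) e' i"
    by (rule succeq_imp_nonneg_solution[OF s2 sizes(2)])
  ultimately have "interval_coords k (lift d1 d2 k \<gamma>) e e'"
    unfolding interval_coords_def by blast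
  moreover have "\<forall>i\<in>{1..d1 + d2 + k}. 0 \<le> lift d1 d2 k \<gamma> i"
    using lift_nonneg[OF H] by blast
  moreover have "\<forall>i. i \<notin> {1..d1 + d2 + k} \<longrightarrow> lift d1 d2 k \<gamma> i = 0"
    by (simp add: lift_def)
  ultimately show ?thesis
    unfolding Ik_iff by blast
qed

text \<open>The support bound comes from applying the middle vanishing of elements of \<open>I\<^sup>(\<^sup>k\<^sup>)\<close> for
  some \<open>k\<close> so large that the supports of \<open>\<gamma>\<close> cannot reach each other.\<close>
lemma Iset_supported:
  assumes \<gamma>: "\<gamma> \<in> Iset C1 d1 C2 d2 a1 a2 lam1 lam2"
  shows "supported_in LB RB \<gamma>"
proof -
  have H: "\<gamma> \<in> H2plus" using \<gamma> unfolding Iset_def by auto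
  define k where "k = K0 + ls d1 \<gamma> + rs d2 \<gamma>"
  let ?n = "d1 + d2 + k"
  have k: "K0 \<le> k" and big: "LB + RB + ls d1 \<gamma> + rs d2 \<gamma> < ?n"
    unfolding k_def K0_def by auto
  have "lift d1 d2 k \<gamma> \<in> Ik C1 d1 C2 d2 k lam1 lam2"
    using big unfolding LB_def RB_def by (intro Iset_lift_in_Ik[OF \<gamma>]) auto
  then obtain e e' where pos: "\<forall>i\<in>{1..?n}. 0 \<le> lift d1 d2 k \<gamma> i"
    and coords: "interval_coords k (lift d1 d2 k \<gamma>) e e'"
    unfolding Ik_iff by blast
  note mid = interval_coords_mid_zero[OF k pos coords]
  have supp: "supported_in (ls d1 \<gamma>) (rs d2 \<gamma>) \<gamma>"
    by (rule H2plus_supported_in[OF H order_refl order_refl])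
  have "fst \<gamma> i = 0" if "LB < i" for i
  proof (cases "ls d1 \<gamma> < i")
    case False
    then have "i \<in> {1..?n}" "?n + 1 - i > rs d2 \<gamma>" "i < ?n + 1 - RB" using that big by auto
    then show ?thesis using mid[of i] that supp unfolding supported_in_def lift_def by auto
  qed (use supp in \<open>auto simp: supported_in_def\<close>)
  moreover have "snd \<gamma> j = 0" if "RB < j" for j
  proof (cases "rs d2 \<gamma> < j")
    case False
    then have "?n + 1 - j \<in> {1..?n}" "?n + 1 - j > ls d1 \<gamma>" "LB < ?n + 1 - j"
      "?n + 1 - j < ?n + 1 - RB" "?n + 1 - (?n + 1 - j) = j" using that big by auto
    then show ?thesis using mid[of "?n + 1 - j"] supp unfolding supported_in_def lift_def by auto
  qed (use supp in \<open>auto simp: supported_in_def\<close>)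
  ultimately show ?thesis unfolding supported_in_def by blast
qed

lemma unlift_lift:
  assumes \<gamma>: "\<gamma> \<in> Iset C1 d1 C2 d2 a1 a2 lam1 lam2" and k: "K0 \<le> k"
  shows "unlift k (lift d1 d2 k \<gamma>) = \<gamma>"
proof -
  interpret coeff_layout d1 d2 k LB RB by (rule coeff_layout_LB_RB[OF k])
  have supp: "supported_in LB RB \<gamma>" by (rule Iset_supported[OF \<gamma>])
  have "fst \<gamma> 0 = 0" "snd \<gamma> 0 = 0"
    using \<gamma> unfolding Iset_def H2plus_def H1plus_def by auto
  then have "fst (unlift k (lift d1 d2 k \<gamma>)) = fst \<gamma>" "snd (unlift k (lift d1 d2 k \<gamma>)) = snd \<gamma>"
    using supp lift_left[OF supp] lift_right[OF supp]
    unfolding unlift_def supported_in_def by (auto simp: fun_eq_iff not_less_eq_eq le_Suc_eq)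
  then show ?thesis by (simp add: prod_eq_iff)
qed

lemma Iset_sizes:
  assumes \<gamma>: "\<gamma> \<in> Iset C1 d1 C2 d2 a1 a2 lam1 lam2" and k: "K0 \<le> k"
  shows "max (ls d1 \<gamma>) l0 + max (rs d2 \<gamma>) r0 \<le> d1 + d2 + k"
proof -
  have "d1 \<le> LB" "d2 \<le> RB" "l0 \<le> LB" "r0 \<le> RB"
    using l0_r0_ge unfolding LB_def RB_def by auto
  then have "ls d1 \<gamma> \<le> LB" "rs d2 \<gamma> \<le> RB" "l0 \<le> LB" "r0 \<le> RB"
    using supported_in_imp_ls_rs_le[OF Iset_supported[OF \<gamma>]] by auto
  then have "max (ls d1 \<gamma>) l0 \<le> LB" "max (rs d2 \<gamma>) r0 \<le> RB" by simp_all
  with LB_RB_less[OF k] show ?thesis by linarith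
qed

lemma Ik_finite:
  assumes k: "K0 \<le> k"
  shows "finite (Ik C1 d1 C2 d2 k lam1 lam2)"
proof -
  let ?n = "d1 + d2 + k"
  define M where "M = Max (F k ` {1..?n})"
  define box where "box = {e. \<forall>j. (j \<in> {1..?n} \<longrightarrow> e j \<in> {0..M}) \<and> (j \<notin> {1..?n} \<longrightarrow> e j = 0)}"
  define weight where "weight e i = (if i \<in> {1..?n} then lift d1 d2 k lam1 i - mat_apply ?n (Zmat C1 d1 C2 d2 k) e i else 0)"
    for e :: "nat \<Rightarrow> int" and i
  have "Ik C1 d1 C2 d2 k lam1 lam2 \<subseteq> weight ` box"
  proof
    fix \<beta> assume "\<beta> \<in> Ik C1 d1 C2 d2 k lam1 lam2"
    then obtain e e' where out: "\<forall>i. i \<notin> {1..?n} \<longrightarrow> \<beta> i = 0"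
      and coords: "interval_coords k \<beta> e e'"
      unfolding Ik_iff by blast
    define e0 where "e0 j = (if j \<in> {1..?n} then e j else 0)" for j
    have "e j \<le> F k j" if "j \<in> {1..?n}" for j
      using interval_coords_sum[OF k coords] coords that unfolding interval_coords_def by force
    moreover have "F k j \<le> M" if "j \<in> {1..?n}" for j
      unfolding M_def using that by (intro Max_ge) auto
    ultimately have "e0 \<in> box"
      using coords unfolding box_def e0_def interval_coords_def by fastforce
    moreover have "\<beta> = weight e0"
    proof
      fix i
      show "\<beta> i = weight e0 i"
      proof (cases "i \<in> {1..?n}")
        case True
        have "mat_apply ?n (Zmat C1 d1 C2 d2 k) e0 i = mat_apply ?n (Zmat C1 d1 C2 d2 k) e i"
          by (rule sum.cong) (auto simp: e0_def)
        moreover have "lift d1 d2 k lam1 i - \<beta> i = mat_apply ?n (Zmat C1 d1 C2 d2 k) e i"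
          using coords True unfolding interval_coords_def by blast
        ultimately show ?thesis using True unfolding weight_def by simp
      qed (use out in \<open>auto simp: weight_def\<close>)
    qed
    ultimately show "\<beta> \<in> weight ` box" by blast
  qed
  moreover have "finite box"
    unfolding box_def by (intro finite_set_of_finite_funs) auto
  ultimately show ?thesis by (meson finite_imageI finite_subset)
qed

lemma Iset_finite: "finite (Iset C1 d1 C2 d2 a1 a2 lam1 lam2)"
proof (rule finite_subset[OF _ finite_imageI[OF Ik_finite[OF order_refl]]])
  show "Iset C1 d1 C2 d2 a1 a2 lam1 lam2 \<subseteq> unlift K0 ` Ik C1 d1 C2 d2 K0 lam1 lam2"
  proof
    fix \<gamma> assume \<gamma>: "\<gamma> \<in> Iset C1 d1 C2 d2 a1 a2 lam1 lam2"
    have "lift d1 d2 K0 \<gamma> \<in> Ik C1 d1 C2 d2 K0 lam1 lam2"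
      by (rule Iset_lift_in_Ik[OF \<gamma> Iset_sizes[OF \<gamma> order_refl]])
    then show "\<gamma> \<in> unlift K0 ` Ik C1 d1 C2 d2 K0 lam1 lam2"
      using unlift_lift[OF \<gamma> order_refl] by (intro image_eqI[where x = "lift d1 d2 K0 \<gamma>"]) auto
  qed
qed

lemma Ik_eq_lift_Iset:
  assumes k: "K0 \<le> k"
  shows "Ik C1 d1 C2 d2 k lam1 lam2 = lift d1 d2 k ` Iset C1 d1 C2 d2 a1 a2 lam1 lam2"
proof
  show "Ik C1 d1 C2 d2 k lam1 lam2 \<subseteq> lift d1 d2 k ` Iset C1 d1 C2 d2 a1 a2 lam1 lam2"
  proof
    fix \<beta> assume \<beta>: "\<beta> \<in> Ik C1 d1 C2 d2 k lam1 lam2"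
    show "\<beta> \<in> lift d1 d2 k ` Iset C1 d1 C2 d2 a1 a2 lam1 lam2"
      using Ik_imp_unlift[OF k \<beta>] by (intro image_eqI[where x = "unlift k \<beta>"]) auto
  qed
  show "lift d1 d2 k ` Iset C1 d1 C2 d2 a1 a2 lam1 lam2 \<subseteq> Ik C1 d1 C2 d2 k lam1 lam2"
  proof
    fix \<beta> assume "\<beta> \<in> lift d1 d2 k ` Iset C1 d1 C2 d2 a1 a2 lam1 lam2"
    then obtain \<gamma> where \<gamma>: "\<gamma> \<in> Iset C1 d1 C2 d2 a1 a2 lam1 lam2" and \<beta>: "\<beta> = lift d1 d2 k \<gamma>"
      by blast
    show "\<beta> \<in> Ik C1 d1 C2 d2 k lam1 lam2"
      unfolding \<beta> by (rule Iset_lift_in_Ik[OF \<gamma> Iset_sizes[OF \<gamma> k]])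
  qed
qed

end

theorem lemma5p13:
  fixes C1 C2 :: "nat \<Rightarrow> nat \<Rightarrow> int" and d1 d2 :: nat and a1 a2 :: "nat \<Rightarrow> int"
    and lam1 lam2 :: "(nat \<Rightarrow> int) \<times> (nat \<Rightarrow> int)"
  assumes "d1 \<ge> 1" and "d2 \<ge> 1"
    and "sym_gcm C1 d1" and "sym_gcm C2 d2"
    and "extensible_pair C1 d1 C2 d2"
    and "a_seq_ok C1 d1 a1" and "a_seq_ok C2 d2 a2"
    and "lam1 \<in> H2plus" and "lam2 \<in> H2plus"
    and "succeq C1 d1 C2 d2 a1 a2 lam1 lam2"
  shows "finite (Iset C1 d1 C2 d2 a1 a2 lam1 lam2) \<and>
         (\<exists>N. \<forall>k\<ge>N. Ik C1 d1 C2 d2 k lam1 lam2 =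
                       lift d1 d2 k ` Iset C1 d1 C2 d2 a1 a2 lam1 lam2)"
proof -
  obtain b c s where coeffs:
    "succeq_coeffs C1 d1 C2 d2 (max (ls d1 lam1) (ls d1 lam2)) (max (rs d2 lam1) (rs d2 lam2)) lam1 lam2 b c s"
    using assms(10) unfolding succeq_iff by blast
  interpret succeq_interval C1 C2 d1 d2 a1 a2 lam1 lam2 b c s
    by unfold_locales (use assms(1,2,5-9) coeffs in auto)
  show ?thesis using Iset_finite Ik_eq_lift_Iset by blast
qed

end
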